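(* The map $F^\bullet=\bigoplus_{r\ge0}F^r:S(M^* )\to\mathcal{P}[M_{\bar0}]$ is an isomorphism of graded-commutative graded $\Lambda$-algebras. Moreover, if $\lambda\in\Lambda_{\bar0}$ and $f\in\mathcal{P}^r[M_{\bar0}]$, then $f(\lambda v)=\lambda^r f(v)$ for all $v\in M_{\bar0}$.
   Context: $\Lambda=\varinjlim\wedge(\mathbb{C}^N)$ is the infinite Grassmann algebra, $\mathbb{Z}_2$-graded and supercommutative; $\Lambda$-modules are $\mathbb{Z}_2$-graded with $\lambda v=(-1)^{[\lambda][v]}v\lambda$, $\Lambda$-linear maps satisfy $T(v\lambda)=T(v)\lambda$. Let $M_{\mathbb{C}}$ be a finite-dimensional $\mathbb{Z}_2$-graded complex vector space, $M=M_{\mathbb{C}}\otimes_{\mathbb{C}}\Lambda$, $M^*=\mathrm{Hom}_\Lambda(M,\Lambda)$ with $(\lambda T)(v)=\lambda T(v)$, $T^r(M^* )=(M^* )^{\otimes_\Lambda r}$, and $S(M^* )=T(M^* )/I$, where $I$ is the ideal generated by $u\otimes v-(-1)^{[u][v]}v\otimes u$ ($u,v\in M^*$), with $S^r(M^* )$ the image of $T^r(M^* )$. Let $\gamma:T^r(M^* )\otimes_\Lambda T^r(M)\to\Lambda$ be $\gamma(\bar v_1\otimes\cdots\otimes\bar v_r\otimes w_1\otimes\cdots\otimes w_r)=(-1)^J\bar v_1(w_1)\cdots\bar v_r(w_r)$ with $J=\sum_{\mu}[w_\mu]([\bar v_{\mu+1}]+\cdots+[\bar v_r])$ for homogeneous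 entries, extended multilinearly. Define $F^r(\bar{\mathbf v})(v)=\gamma(\bar{\mathbf v}\otimes v\otimes\cdots\otimes v)$ for $\bar{\mathbf v}\in T^r(M^* )$, $v\in M$; restricted to $v\in M_{\bar0}$ this factors through $S^r(M^* )$, giving $F^r:S^r(M^* )\to\{\text{functions }M_{\bar0}\to\Lambda\}$. The image $\mathcal{P}^r[M_{\bar0}]$ is the space of polynomial functions of degree $r$ on $M_{\bar0}$, and $\mathcal{P}[M_{\bar0}]=\bigoplus_r\mathcal{P}^r[M_{\bar0}]$, an algebra under pointwise multiplication. *)

theory Defs
  imports Complex_Main "HOL-Library.Function_Algebras"
begin

(* The infinite Grassmann algebra  Lambda = lim_N  wedge(C^N).          *)
(* An element is a finite C-linear combination of monomials            *)
(* xi_S = xi_{s1} ... xi_{sk}  (s1 < ... < sk, S finite subset of nat), *)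
(* represented by its coefficient function  S |-> coefficient.          *)
(* Addition, negation, zero are pointwise (Function_Algebras).          *)

type_synonym lam = "nat set \<Rightarrow> complex"

definition Lam :: "lam set" where
  "Lam = {a. finite {S. a S \<noteq> 0} \<and> (\<forall>S. a S \<noteq> 0 \<longrightarrow> finite S)}"

text \<open>sign with xi_S xi_T = gsign S T xi_(S union T) for disjoint S, T\<close>
definition gsign :: "nat set \<Rightarrow> nat set \<Rightarrow> complex" where
  "gsign S T = (-1) ^ card {(i, j). i \<in> S \<and> j \<in> T \<and> j < i}"

definition gmul :: "lam \<Rightarrow> lam \<Rightarrow> lam" where
  "gmul a b = (\<lambda>U. if finite U then (\<Sum>S\<in>Pow U. gsign S (U - S) * a S * b (U - S)) else 0)"

definition gconst :: "complex \<Rightarrow> lam" where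
  "gconst c = (\<lambda>S. if S = {} then c else 0)"

text \<open>Z2-homogeneity: lpar False a = a is even, lpar True a = a is odd\<close>
definition lpar :: "bool \<Rightarrow> lam \<Rightarrow> bool" where
  "lpar d a \<longleftrightarrow> (\<forall>S. a S \<noteq> 0 \<longrightarrow> odd (card S) = d)"

definition gev :: "lam \<Rightarrow> lam" where
  "gev a = (\<lambda>S. if even (card S) then a S else 0)"

definition god :: "lam \<Rightarrow> lam" where
  "god a = (\<lambda>S. if odd (card S) then a S else 0)"

fun gpow :: "lam \<Rightarrow> nat \<Rightarrow> lam" where
  "gpow a 0 = gconst 1"
| "gpow a (Suc r) = gmul a (gpow a r)"

definition gprod :: "lam list \<Rightarrow> lam" where
  "gprod xs = foldr gmul xs (gconst 1)"

(* M = M_C (x) Lambda.  M_C has a homogeneous basis e_0..e_{n-1},       *)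
(* e_i of parity par i.  v = sum_i e_i v_i  is stored as  i |-> v_i.    *)

type_synonym mel = "nat \<Rightarrow> lam"

definition Mset :: "nat \<Rightarrow> mel set" where
  "Mset n = {v. \<forall>i. (i < n \<longrightarrow> v i \<in> Lam) \<and> (n \<le> i \<longrightarrow> v i = 0)}"

text \<open>v is homogeneous of parity e: [e_i v_i] = par i + [v_i] = e\<close>
definition mpar :: "nat \<Rightarrow> (nat \<Rightarrow> bool) \<Rightarrow> bool \<Rightarrow> mel \<Rightarrow> bool" where
  "mpar n par e v \<longleftrightarrow> (\<forall>i<n. lpar (e \<noteq> par i) (v i))"

definition M0 :: "nat \<Rightarrow> (nat \<Rightarrow> bool) \<Rightarrow> mel set" where
  "M0 n par = {v \<in> Mset n. mpar n par False v}"

definition mright :: "mel \<Rightarrow> lam \<Rightarrow> mel" where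
  "mright v \<mu> = (\<lambda>i. gmul (v i) \<mu>)"

text \<open>left action, using  mu e_i = (-1)^([mu] par i) e_i mu\<close>
definition mleft :: "(nat \<Rightarrow> bool) \<Rightarrow> lam \<Rightarrow> mel \<Rightarrow> mel" where
  "mleft par \<mu> v = (\<lambda>i. gmul (gev \<mu>) (v i)
       + (if par i then - gmul (god \<mu>) (v i) else gmul (god \<mu>) (v i)))"

definition mevp :: "(nat \<Rightarrow> bool) \<Rightarrow> mel \<Rightarrow> mel" where
  "mevp par v = (\<lambda>i. if par i then god (v i) else gev (v i))"

definition modp :: "(nat \<Rightarrow> bool) \<Rightarrow> mel \<Rightarrow> mel" where
  "modp par v = (\<lambda>i. if par i then gev (v i) else god (v i))"

(* M^* = Hom_Lambda(M, Lambda): additive, right Lambda-linear maps      *)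
(* M -> Lambda (taken to be 0 outside M, so that equality is equality   *)
(* of maps on M).                                                       *)

type_synonym dual = "mel \<Rightarrow> lam"

definition Dual :: "nat \<Rightarrow> dual set" where
  "Dual n = {T. (\<forall>v. v \<notin> Mset n \<longrightarrow> T v = 0)
       \<and> (\<forall>v\<in>Mset n. T v \<in> Lam)
       \<and> (\<forall>v\<in>Mset n. \<forall>w\<in>Mset n. T (v + w) = T v + T w)
       \<and> (\<forall>v\<in>Mset n. \<forall>\<mu>\<in>Lam. T (mright v \<mu>) = gmul (T v) \<mu>)}"

definition dpar :: "nat \<Rightarrow> (nat \<Rightarrow> bool) \<Rightarrow> bool \<Rightarrow> dual \<Rightarrow> bool" where
  "dpar n par d T \<longleftrightarrow> (\<forall>e v. v \<in> Mset n \<longrightarrow> mpar n par e v \<longrightarrow> lpar (e \<noteq> d) (T v))"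

definition dlmul :: "nat \<Rightarrow> lam \<Rightarrow> dual \<Rightarrow> dual" where
  "dlmul n \<mu> T = (\<lambda>v. if v \<in> Mset n then gmul \<mu> (T v) else 0)"

definition devp :: "nat \<Rightarrow> (nat \<Rightarrow> bool) \<Rightarrow> dual \<Rightarrow> dual" where
  "devp n par T = (\<lambda>v. if v \<in> Mset n then gev (T (mevp par v)) + god (T (modp par v)) else 0)"

text \<open>right action on M^*, determined by  T mu = (-1)^([mu][T]) mu T  for
  homogeneous T, mu:  T mu = mu_0 T + mu_1 (T_even - T_odd)\<close>
definition dright :: "nat \<Rightarrow> (nat \<Rightarrow> bool) \<Rightarrow> dual \<Rightarrow> lam \<Rightarrow> dual" where
  "dright n par T \<mu> = (\<lambda>v. if v \<in> Mset n then
       gmul (gev \<mu>) (T v) + gmul (god \<mu>) (devp n par T v - (T v - devp n par T v)) else 0)"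

(* A "formal element" x assigns to each word [u_1,...,u_r] of elements  *)
(* of M^* a coefficient x [u_1..u_r] in Lambda (finitely many nonzero); *)
(* it stands for  sum  x(us) . u_1 (x) ... (x) u_r.  The tensor algebra *)
(* T(M^* ) is the quotient of these formal elements by the relations    *)
(* defining the tensor product over Lambda (multi-additivity, balance,  *)
(* lambda.(u (x) ..) = (lambda u) (x) ..), and S(M^* ) = T(M^* )/I is   *)
(* the quotient by Krel, which adds the generators of I.                *)

type_synonym tel = "dual list \<Rightarrow> lam"

definition FT :: "nat \<Rightarrow> tel set" where
  "FT n = {x. finite {us. x us \<noteq> 0}
      \<and> (\<forall>us. x us \<in> Lam \<and> (x us \<noteq> 0 \<longrightarrow> set us \<subseteq> Dual n))}"

definition FTdeg :: "nat \<Rightarrow> nat \<Rightarrow> tel set" where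
  "FTdeg n r = {x \<in> FT n. \<forall>us. x us \<noteq> 0 \<longrightarrow> length us = r}"

definition fsingle :: "lam \<Rightarrow> dual list \<Rightarrow> tel" where
  "fsingle l us = (\<lambda>ws. if ws = us then l else 0)"

definition flmul :: "lam \<Rightarrow> tel \<Rightarrow> tel" where
  "flmul l x = (\<lambda>us. gmul l (x us))"

definition psign :: "bool \<Rightarrow> bool \<Rightarrow> complex" where
  "psign d e = (if d \<and> e then -1 else 1)"

inductive_set Krel :: "nat \<Rightarrow> (nat \<Rightarrow> bool) \<Rightarrow> tel set" for n par where
  zero: "0 \<in> Krel n par"
| add: "x \<in> Krel n par \<Longrightarrow> y \<in> Krel n par \<Longrightarrow> x + y \<in> Krel n par"
| lmul: "l \<in> Lam \<Longrightarrow> x \<in> Krel n par \<Longrightarrow> flmul l x \<in> Krel n par"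
| additive: "set a \<subseteq> Dual n \<Longrightarrow> set b \<subseteq> Dual n \<Longrightarrow> u \<in> Dual n \<Longrightarrow> u' \<in> Dual n \<Longrightarrow>
     fsingle (gconst 1) (a @ [u + u'] @ b) - fsingle (gconst 1) (a @ [u] @ b)
       - fsingle (gconst 1) (a @ [u'] @ b) \<in> Krel n par"
| front: "\<mu> \<in> Lam \<Longrightarrow> u \<in> Dual n \<Longrightarrow> set b \<subseteq> Dual n \<Longrightarrow>
     fsingle \<mu> (u # b) - fsingle (gconst 1) (dlmul n \<mu> u # b) \<in> Krel n par"
| balance: "\<mu> \<in> Lam \<Longrightarrow> set a \<subseteq> Dual n \<Longrightarrow> set b \<subseteq> Dual n \<Longrightarrow> u \<in> Dual n \<Longrightarrow> w \<in> Dual n \<Longrightarrow>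
     fsingle (gconst 1) (a @ [dright n par u \<mu>, w] @ b)
       - fsingle (gconst 1) (a @ [u, dlmul n \<mu> w] @ b) \<in> Krel n par"
| symm: "set a \<subseteq> Dual n \<Longrightarrow> set b \<subseteq> Dual n \<Longrightarrow> u \<in> Dual n \<Longrightarrow> w \<in> Dual n \<Longrightarrow>
     dpar n par d u \<Longrightarrow> dpar n par e w \<Longrightarrow>
     fsingle (gconst 1) (a @ [u, w] @ b)
       - fsingle (gconst (psign d e)) (a @ [w, u] @ b) \<in> Krel n par"

text \<open>F: for v in M_0 (even, so J = 0), F(lambda u_1 (x)..(x) u_r)(v) = lambda u_1(v)...u_r(v)\<close>
definition Fmap :: "tel \<Rightarrow> mel \<Rightarrow> lam" where
  "Fmap x v = (\<Sum>us\<in>{us. x us \<noteq> 0}. gmul (x us) (gprod (map (\<lambda>u. u v) us)))"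

text \<open>product of two pure terms in T(M^* ):
  (lambda us) (mu ws) = lambda (us (x) mu ws), with mu absorbed into the first
  factor of ws, or (if ws is empty) into the last factor of us via the right action\<close>
definition tterm :: "nat \<Rightarrow> (nat \<Rightarrow> bool) \<Rightarrow> lam \<Rightarrow> dual list \<Rightarrow> lam \<Rightarrow> dual list \<Rightarrow> tel" where
  "tterm n par l us \<mu> ws =
     (if ws = [] then
        (if us = [] then fsingle (gmul l \<mu>) []
         else fsingle l (butlast us @ [dright n par (last us) \<mu>]))
      else fsingle l (us @ dlmul n \<mu> (hd ws) # tl ws))"

definition tmul :: "nat \<Rightarrow> (nat \<Rightarrow> bool) \<Rightarrow> tel \<Rightarrow> tel \<Rightarrow> tel" where
  "tmul n par x y = (\<Sum>us\<in>{us. x us \<noteq> 0}. \<Sum>ws\<in>{ws. y ws \<noteq> 0}. tterm n par (x us) us (y ws) ws)"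

definition fhom :: "nat \<Rightarrow> (nat \<Rightarrow> bool) \<Rightarrow> bool \<Rightarrow> tel \<Rightarrow> bool" where
  "fhom n par d x \<longleftrightarrow> (\<forall>us. x us \<noteq> 0 \<longrightarrow>
      (\<exists>e ds. length ds = length us \<and> lpar e (x us)
         \<and> (\<forall>k<length us. dpar n par (ds ! k) (us ! k))
         \<and> foldr (\<lambda>a b. a \<noteq> b) ds e = d))"

end

theory Submission
  imports Defs "HOL-Computational_Algebra.Polynomial" "HOL-Library.Multiset"
begin

text \<open>
  Evaluation annihilates the relations defining \<open>S(M\<^sup>*)\<close> on even vectors: there \<open>u \<mu>\<close> acts as
  \<open>v \<mapsto> u(v) \<mu>\<close>, and the sign rule of \<open>S(M\<^sup>*)\<close> is the supercommutativity of \<open>\<Lambda>\<close>. Conversely,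
  using only the relations, every element of \<open>T(M\<^sup>*)\<close> is a \<open>\<Lambda>\<close>-combination of sorted words in
  the coordinate functionals \<open>e\<^sub>i\<^sup>*\<close> of a homogeneous basis with no odd coordinate repeated.
  Such a combination is detected by evaluation: at the even vector whose odd coordinates are
  distinct fresh Grassmann generators \<open>\<xi>\<^sub>N\<^sub>+\<^sub>i\<close> and whose even coordinates are complex numbers
  \<open>t\<^sub>i\<close>, the odd letters of a normal word become a monomial in the \<open>\<xi>\<close>'s and its even letters a
  monomial in the \<open>t\<^sub>i\<close>, so distinct normal words are separated by polynomial identity. The
  remaining assertions (multiplicativity, parity, \<open>f(\<lambda> v) = \<lambda>\<^sup>r f(v)\<close>) follow directly from
  \<open>F\<close> being a sum of products of evaluations, as even scalars are central in \<open>\<Lambda>\<close>.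
\<close>

section \<open>The Grassmann algebra\<close>

lemma sum_fun_apply: "(sum f A) x = (\<Sum>a\<in>A. f a x)"
  by (induction A rule: infinite_finite_induct) auto

lemma sum_closed:
  assumes "P 0" "\<And>x y. P x \<Longrightarrow> P y \<Longrightarrow> P (x + y)" "\<And>a. a \<in> A \<Longrightarrow> P (f a)"
  shows "P (sum f A)"
  using assms(3) by (induction A rule: infinite_finite_induct) (auto intro: assms(1,2))

text \<open>\<open>gmul\<close> vanishes on infinite index sets by definition, so \<open>gconst 1\<close> is a unit only
  for elements that vanish there too (all of \<open>Lam\<close> does).\<close>

definition zero_on_infinite :: "lam \<Rightarrow> bool" where
  "zero_on_infinite a \<longleftrightarrow> (\<forall>U. infinite U \<longrightarrow> a U = 0)"

lemma Lam_zero_on_infinite: "a \<in> Lam \<Longrightarrow> zero_on_infinite a"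
  unfolding Lam_def zero_on_infinite_def by auto

lemma zero_on_infinite_gmul: "zero_on_infinite (gmul a b)"
  unfolding zero_on_infinite_def gmul_def by auto

lemma zero_on_infinite_gconst[simp]: "zero_on_infinite (gconst c)" by (auto simp: zero_on_infinite_def gconst_def)

lemma gmul_infinite[simp]: "infinite U \<Longrightarrow> gmul a b U = 0"
  unfolding gmul_def by auto

lemma gmul_finite: "finite U \<Longrightarrow> gmul a b U = (\<Sum>S\<in>Pow U. gsign S (U - S) * a S * b (U - S))"
  unfolding gmul_def by auto

lemma gmul_add_left: "gmul (a + b) c = gmul a c + gmul b c"
  unfolding gmul_def by (auto simp: algebra_simps sum.distrib)

lemma gmul_add_right: "gmul a (b + c) = gmul a b + gmul a c"
  unfolding gmul_def by (auto simp: algebra_simps sum.distrib)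

lemma gmul_zero_left[simp]: "gmul 0 b = 0"
  unfolding gmul_def by auto

lemma gmul_zero_right[simp]: "gmul a 0 = 0"
  unfolding gmul_def by auto

lemma gmul_uminus_right: "gmul a (- b) = - gmul a b"
  unfolding gmul_def by (auto simp: sum_negf)

lemma gmul_diff_left: "gmul (a - b) c = gmul a c - gmul b c"
  unfolding gmul_def by (auto simp: algebra_simps sum_subtractf)

lemma gmul_diff_right: "gmul a (b - c) = gmul a b - gmul a c"
  unfolding gmul_def by (auto simp: algebra_simps sum_subtractf)

lemma gmul_sum_left: "gmul (sum f A) c = (\<Sum>x\<in>A. gmul (f x) c)"
  by (induction A rule: infinite_finite_induct) (simp_all only: sum.infinite sum.empty sum.insert gmul_zero_left gmul_add_left simp_thms)

lemma gmul_sum_right: "gmul c (sum f A) = (\<Sum>x\<in>A. gmul c (f x))"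
  by (induction A rule: infinite_finite_induct) (simp_all only: sum.infinite sum.empty sum.insert gmul_zero_right gmul_add_right simp_thms)

definition scal :: "complex \<Rightarrow> lam \<Rightarrow> lam" where
  "scal c a = (\<lambda>U. c * a U)"

lemma gmul_gconst_left: "gmul (gconst c) a = (\<lambda>U. if finite U then c * a U else 0)"
proof (rule ext)
  fix U show "gmul (gconst c) a U = (if finite U then c * a U else 0)"
  proof (cases "finite U")
    case True
    have "gmul (gconst c) a U = (\<Sum>S\<in>Pow U. gsign S (U - S) * gconst c S * a (U - S))"
      using True by (rule gmul_finite)
    also have "\<dots> = (\<Sum>S\<in>{{}}. gsign S (U - S) * gconst c S * a (U - S))"
      by (rule sum.mono_neutral_right) (auto simp: True gconst_def)
    also have "\<dots> = c * a U" by (simp add: gconst_def gsign_def)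
    finally show ?thesis using True by simp
  qed simp
qed

lemma gmul_gconst_right: "gmul a (gconst c) = (\<lambda>U. if finite U then c * a U else 0)"
proof (rule ext)
  fix U show "gmul a (gconst c) U = (if finite U then c * a U else 0)"
  proof (cases "finite U")
    case True
    have "gmul a (gconst c) U = (\<Sum>S\<in>Pow U. gsign S (U - S) * a S * gconst c (U - S))"
      using True by (rule gmul_finite)
    also have "\<dots> = (\<Sum>S\<in>{U}. gsign S (U - S) * a S * gconst c (U - S))"
      by (rule sum.mono_neutral_right) (auto simp: True gconst_def)
    also have "\<dots> = c * a U" by (simp add: gconst_def gsign_def)
    finally show ?thesis using True by simp
  qed simp
qed

lemma gmul_gconst_left_scal: "zero_on_infinite a \<Longrightarrow> gmul (gconst c) a = scal c a"
  by (auto simp: gmul_gconst_left scal_def zero_on_infinite_def)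

lemma gmul_gconst_right_scal: "zero_on_infinite a \<Longrightarrow> gmul a (gconst c) = scal c a"
  by (auto simp: gmul_gconst_right scal_def zero_on_infinite_def)

lemma gmul_one_left: "zero_on_infinite a \<Longrightarrow> gmul (gconst 1) a = a"
  by (simp add: gmul_gconst_left_scal scal_def)

lemma gmul_one_right: "zero_on_infinite a \<Longrightarrow> gmul a (gconst 1) = a"
  by (simp add: gmul_gconst_right_scal scal_def)

lemma gmul_gconst_gconst: "gmul (gconst c) (gconst d) = gconst (c * d)"
  by (subst gmul_gconst_left_scal[OF zero_on_infinite_gconst]) (simp add: scal_def gconst_def fun_eq_iff)

lemma gmul_scal_left: "gmul (scal c a) b = scal c (gmul a b)"
  unfolding gmul_def scal_def by (auto simp: sum_distrib_left algebra_simps)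

lemma gmul_scal_right: "gmul a (scal c b) = scal c (gmul a b)"
  unfolding gmul_def scal_def by (auto simp: sum_distrib_left algebra_simps)

lemma gmul_gconst_scal: "zero_on_infinite y \<Longrightarrow> gmul (gconst c) (scal d y) = scal (c * d) y"
  by (auto simp: gmul_gconst_left zero_on_infinite_def scal_def fun_eq_iff)

lemma scal_minus_one: "scal (-1) a = - a" by (auto simp: scal_def fun_eq_iff)

definition inversions :: "nat set \<Rightarrow> nat set \<Rightarrow> (nat \<times> nat) set" where
  "inversions S T = {(i, j). i \<in> S \<and> j \<in> T \<and> j < i}"

lemma gsign_inversions: "gsign S T = (-1) ^ card (inversions S T)"
  unfolding gsign_def inversions_def by simp

lemma finite_inversions: "finite S \<Longrightarrow> finite T \<Longrightarrow> finite (inversions S T)"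
  unfolding inversions_def by (rule finite_subset[of _ "S \<times> T"]) auto

lemma gsign_union_left:
  assumes "finite S" "finite R" "finite T" "S \<inter> R = {}"
  shows "gsign (S \<union> R) T = gsign S T * gsign R T"
proof -
  have "inversions (S \<union> R) T = inversions S T \<union> inversions R T" unfolding inversions_def by auto
  moreover have "inversions S T \<inter> inversions R T = {}" using assms(4) unfolding inversions_def by auto
  ultimately have "card (inversions (S \<union> R) T) = card (inversions S T) + card (inversions R T)"
    using assms by (simp add: card_Un_disjoint finite_inversions)
  thus ?thesis by (simp add: gsign_inversions power_add)
qed

lemma gsign_union_right:
  assumes "finite S" "finite R" "finite T" "T \<inter> R = {}"
  shows "gsign S (T \<union> R) = gsign S T * gsign S R"
proof -
  have "inversions S (T \<union> R) = inversions S T \<union> inversions S R" unfolding inversions_def by auto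
  moreover have "inversions S T \<inter> inversions S R = {}" using assms(4) unfolding inversions_def by auto
  ultimately have "card (inversions S (T \<union> R)) = card (inversions S T) + card (inversions S R)"
    using assms by (simp add: card_Un_disjoint finite_inversions)
  thus ?thesis by (simp add: gsign_inversions power_add)
qed

lemma gsign_mult_gsign_swap:
  assumes "finite S" "finite T" "S \<inter> T = {}"
  shows "gsign S T * gsign T S = (-1) ^ (card S * card T)"
proof -
  have e: "S \<times> T = inversions S T \<union> (\<lambda>(j,i). (i,j)) ` inversions T S"
    using assms(3) unfolding inversions_def by (auto simp: image_iff)
  have d: "inversions S T \<inter> (\<lambda>(j,i). (i,j)) ` inversions T S = {}" unfolding inversions_def by auto
  have i: "inj_on (\<lambda>(j,i). (i,j)) (inversions T S)" by (auto simp: inj_on_def)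
  have "card S * card T = card (S \<times> T)" by (simp add: card_cartesian_product)
  also have "\<dots> = card (inversions S T) + card (inversions T S)"
    using assms by (subst e, subst card_Un_disjoint) (auto simp: finite_inversions d card_image[OF i])
  finally show ?thesis by (simp add: gsign_inversions power_add)
qed

lemma gsign_mult_self: "gsign S T * gsign S T = 1"
  by (simp add: gsign_def flip: power_add)

lemma gsign_less: "(\<And>i j. i \<in> S \<Longrightarrow> j \<in> T \<Longrightarrow> i < j) \<Longrightarrow> gsign S T = 1"
proof -
  assume "\<And>i j. i \<in> S \<Longrightarrow> j \<in> T \<Longrightarrow> i < j"
  hence "inversions S T = {}" unfolding inversions_def by fastforce
  thus ?thesis by (simp add: gsign_inversions)
qed

lemma gmul_gmul_left_apply:
  assumes fin: "finite U"
  shows "gmul (gmul a b) c U = (\<Sum>(S,R)\<in>Sigma (Pow U) Pow.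
          gsign S (U - S) * gsign R (S - R) * a R * b (S - R) * c (U - S))"
proof -
  have "gmul (gmul a b) c U = (\<Sum>S\<in>Pow U. \<Sum>R\<in>Pow S.
          gsign S (U - S) * gsign R (S - R) * a R * b (S - R) * c (U - S))"
    unfolding gmul_finite[OF fin]
  proof (rule sum.cong[OF refl])
    fix S assume "S \<in> Pow U"
    hence "finite S" using fin finite_subset by auto
    thus "gsign S (U - S) * gmul a b S * c (U - S) =
      (\<Sum>R\<in>Pow S. gsign S (U - S) * gsign R (S - R) * a R * b (S - R) * c (U - S))"
      by (simp add: gmul_finite sum_distrib_left sum_distrib_right algebra_simps)
  qed
  also have "\<dots> = (\<Sum>(S,R)\<in>Sigma (Pow U) Pow.
          gsign S (U - S) * gsign R (S - R) * a R * b (S - R) * c (U - S))"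
    by (rule sum.Sigma) (use fin in \<open>auto intro: finite_subset\<close>)
  finally show ?thesis .
qed

lemma gmul_gmul_right_apply:
  assumes fin: "finite U"
  shows "gmul a (gmul b c) U = (\<Sum>(R,Q)\<in>Sigma (Pow U) (\<lambda>R. Pow (U - R)).
          gsign R (U - R) * gsign Q (U - R - Q) * a R * b Q * c (U - R - Q))"
proof -
  have "gmul a (gmul b c) U = (\<Sum>R\<in>Pow U. \<Sum>Q\<in>Pow (U - R).
          gsign R (U - R) * gsign Q (U - R - Q) * a R * b Q * c (U - R - Q))"
    unfolding gmul_finite[OF fin]
  proof (rule sum.cong[OF refl])
    fix R assume "R \<in> Pow U"
    have "finite (U - R)" using fin by auto
    thus "gsign R (U - R) * a R * gmul b c (U - R) =
      (\<Sum>Q\<in>Pow (U - R). gsign R (U - R) * gsign Q (U - R - Q) * a R * b Q * c (U - R - Q))"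
      by (simp add: gmul_finite sum_distrib_left sum_distrib_right algebra_simps)
  qed
  also have "\<dots> = (\<Sum>(R,Q)\<in>Sigma (Pow U) (\<lambda>R. Pow (U - R)).
          gsign R (U - R) * gsign Q (U - R - Q) * a R * b Q * c (U - R - Q))"
    by (rule sum.Sigma) (use fin in \<open>auto intro: finite_subset\<close>)
  finally show ?thesis .
qed

text \<open>The two triple sums match under \<open>(S, R) \<mapsto> (R, S - R)\<close>; the signs agree because
  \<open>gsign\<close> is multiplicative in each argument over disjoint unions.\<close>

lemma gmul_assoc: "gmul (gmul a b) c = gmul a (gmul b c)"
proof (rule ext)
  fix U :: "nat set"
  show "gmul (gmul a b) c U = gmul a (gmul b c) U"
  proof (cases "finite U")
    case fin: True
    have "(\<Sum>(S,R)\<in>Sigma (Pow U) Pow.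
          gsign S (U - S) * gsign R (S - R) * a R * b (S - R) * c (U - S))
        = (\<Sum>(R,Q)\<in>Sigma (Pow U) (\<lambda>R. Pow (U - R)).
          gsign R (U - R) * gsign Q (U - R - Q) * a R * b Q * c (U - R - Q))"
    proof (rule sum.reindex_bij_witness[where i = "\<lambda>(R,Q). (R \<union> Q, R)" and j = "\<lambda>(S,R). (R, S - R)"])
      fix SR assume "SR \<in> Sigma (Pow U) Pow"
      then obtain S R where rq: "SR = (S,R)" "S \<subseteq> U" "R \<subseteq> S" by auto
      define Q where "Q = S - R"
      have SQ: "S = R \<union> Q" "R \<inter> Q = {}" using rq unfolding Q_def by auto
      have fR: "finite R" "finite Q" "finite (U - S)"
        using rq fin unfolding Q_def by (auto intro: finite_subset)
      have s1: "gsign S (U - S) = gsign R (U - S) * gsign Q (U - S)"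
        using rq fR SQ by (simp only: SQ(1), intro gsign_union_left) auto
      have e: "U - R = Q \<union> (U - S)" using rq unfolding Q_def by auto
      have s2: "gsign R (U - R) = gsign R Q * gsign R (U - S)"
        using rq fR by (subst e, intro gsign_union_right) (auto simp: Q_def)
      have e2: "U - R - Q = U - S" using rq unfolding Q_def by auto
      show "(case (case SR of (S, R) \<Rightarrow> (R, S - R)) of
           (R, Q) \<Rightarrow> gsign R (U - R) * gsign Q (U - R - Q) * a R * b Q * c (U - R - Q)) =
         (case SR of (S, R) \<Rightarrow> gsign S (U - S) * gsign R (S - R) * a R * b (S - R) * c (U - S))"
        using rq by (simp add: s1 s2 e2 Q_def[symmetric])
    qed auto
    thus ?thesis by (simp only: gmul_gmul_left_apply[OF fin] gmul_gmul_right_apply[OF fin])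
  qed simp
qed

lemma gsign_swap:
  assumes "finite S" "finite T" "S \<inter> T = {}"
  shows "gsign T S = (-1) ^ (card S * card T) * gsign S T"
proof -
  have "gsign S T * gsign T S * gsign S T = (-1) ^ (card S * card T) * gsign S T"
    using gsign_mult_gsign_swap[OF assms] by simp
  hence "gsign T S * (gsign S T * gsign S T) = (-1) ^ (card S * card T) * gsign S T"
    by (simp add: algebra_simps)
  thus ?thesis using gsign_mult_self[of S T] by simp
qed

lemma minus_one_power_mult: "((-1::complex) ^ (k * m)) = psign (odd k) (odd m)"
proof -
  have "odd (k * m) \<longleftrightarrow> odd k \<and> odd m" by simp
  thus ?thesis by (cases "even (k*m)") (auto simp: psign_def neg_one_odd_power neg_one_even_power)
qed

lemma gmul_supercommute:
  assumes a: "lpar d a" and b: "lpar e b"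
  shows "gmul b a = scal (psign d e) (gmul a b)"
proof (rule ext)
  fix U :: "nat set"
  show "gmul b a U = scal (psign d e) (gmul a b) U"
  proof (cases "finite U")
    case fin: True
    have "gmul b a U = (\<Sum>T\<in>Pow U. gsign T (U - T) * b T * a (U - T))" by (rule gmul_finite[OF fin])
    also have "\<dots> = (\<Sum>S\<in>Pow U. gsign (U - S) (U - (U - S)) * b (U - S) * a (U - (U - S)))"
      by (rule sum.reindex_bij_witness[where i = "\<lambda>S. U - S" and j = "\<lambda>S. U - S"])
        (auto simp: Diff_Diff_Int Int_absorb1 Int_absorb2)
    also have "\<dots> = (\<Sum>S\<in>Pow U. psign d e * (gsign S (U - S) * a S * b (U - S)))"
    proof (rule sum.cong[OF refl])
      fix S assume S: "S \<in> Pow U"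
      have e: "U - (U - S) = S" using S by auto
      show "gsign (U - S) (U - (U - S)) * b (U - S) * a (U - (U - S)) =
            psign d e * (gsign S (U - S) * a S * b (U - S))"
      proof (cases "a S = 0 \<or> b (U - S) = 0")
        case True thus ?thesis by (auto simp: e)
      next
        case False
        hence "odd (card S) = d" "odd (card (U - S)) = e" using a b by (auto simp: lpar_def)
        moreover have "gsign (U - S) S = (-1) ^ (card S * card (U - S)) * gsign S (U - S)"
          using S fin by (intro gsign_swap) (auto intro: finite_subset)
        ultimately show ?thesis by (simp add: e minus_one_power_mult)
      qed
    qed
    also have "\<dots> = scal (psign d e) (gmul a b) U"
      by (simp add: scal_def gmul_finite[OF fin] sum_distrib_left)
    finally show ?thesis .
  qed (simp add: scal_def)
qed

lemma Lam_zero[simp]: "0 \<in> Lam" by (simp add: Lam_def)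

lemma Lam_add: "a \<in> Lam \<Longrightarrow> b \<in> Lam \<Longrightarrow> a + b \<in> Lam"
  unfolding Lam_def by (auto intro: finite_subset[of _ "{S. a S \<noteq> 0} \<union> {S. b S \<noteq> 0}"]) (metis add.right_neutral)

lemma Lam_diff: "a \<in> Lam \<Longrightarrow> b \<in> Lam \<Longrightarrow> a - b \<in> Lam"
  unfolding Lam_def by (auto intro: finite_subset[of _ "{S. a S \<noteq> 0} \<union> {S. b S \<noteq> 0}"]) metis

lemma Lam_sum: "(\<And>x. x \<in> A \<Longrightarrow> f x \<in> Lam) \<Longrightarrow> sum f A \<in> Lam"
  by (rule sum_closed[where P = "\<lambda>a. a \<in> Lam"]) (simp_all add: Lam_add)

lemma Lam_gconst[simp]: "gconst c \<in> Lam"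
  unfolding Lam_def gconst_def by (auto intro: finite_subset[of _ "{{}}"])

lemma Lam_gmul:
  assumes "a \<in> Lam" "b \<in> Lam" shows "gmul a b \<in> Lam"
proof -
  let ?A = "{S. a S \<noteq> 0}" and ?B = "{S. b S \<noteq> 0}"
  have "{U. gmul a b U \<noteq> 0} \<subseteq> (\<lambda>(S,T). S \<union> T) ` (?A \<times> ?B)"
  proof
    fix U assume "U \<in> {U. gmul a b U \<noteq> 0}"
    hence U: "gmul a b U \<noteq> 0" by simp
    hence fin: "finite U" using gmul_infinite by blast
    from U obtain S where "S \<in> Pow U" "gsign S (U - S) * a S * b (U - S) \<noteq> 0"
      unfolding gmul_finite[OF fin] by (meson sum.neutral)
    thus "U \<in> (\<lambda>(S,T). S \<union> T) ` (?A \<times> ?B)"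
      by (auto simp: image_iff intro!: bexI[of _ "(S, U - S)"])
  qed
  moreover have "finite ((\<lambda>(S,T). S \<union> T) ` (?A \<times> ?B))" using assms by (auto simp: Lam_def)
  ultimately show ?thesis unfolding Lam_def by (auto intro: finite_subset dest: gmul_infinite)
qed

lemma lpar_zero[simp]: "lpar d 0" by (simp add: lpar_def)

lemma lpar_add: "lpar d a \<Longrightarrow> lpar d b \<Longrightarrow> lpar d (a + b)" unfolding lpar_def by (metis add.right_neutral plus_fun_apply add_0)

lemma lpar_sum: "(\<And>x. x \<in> A \<Longrightarrow> lpar d (f x)) \<Longrightarrow> lpar d (sum f A)"
  by (rule sum_closed[where P = "lpar d"]) (simp_all add: lpar_add)

lemma lpar_gconst[simp]: "lpar False (gconst c)" by (auto simp: lpar_def gconst_def)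

lemma lpar_gmul:
  assumes "lpar d a" "lpar e b" shows "lpar (d \<noteq> e) (gmul a b)"
  unfolding lpar_def
proof (intro allI impI)
  fix U assume U: "gmul a b U \<noteq> 0"
  hence fin: "finite U" using gmul_infinite by blast
  from U obtain S where S: "S \<in> Pow U" "gsign S (U - S) * a S * b (U - S) \<noteq> 0"
    unfolding gmul_finite[OF fin] by (meson sum.neutral)
  hence "odd (card S) = d" "odd (card (U - S)) = e" using assms by (auto simp: lpar_def)
  moreover have "card U = card S + card (U - S)" using S fin
    by (metis PowD card_Diff_subset card_mono finite_subset le_add_diff_inverse)
  ultimately show "odd (card U) = (d \<noteq> e)" by auto
qed

lemma gev_add_god: "gev a + god a = a" by (auto simp: gev_def god_def fun_eq_iff)

lemma lpar_gev: "lpar False (gev a)" by (auto simp: lpar_def gev_def)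

lemma lpar_god: "lpar True (god a)" by (auto simp: lpar_def god_def)

lemma gev_even: "lpar False a \<Longrightarrow> gev a = a" by (auto simp: lpar_def gev_def fun_eq_iff)

lemma god_even: "lpar False a \<Longrightarrow> god a = 0" by (auto simp: lpar_def god_def fun_eq_iff)

lemma gev_odd: "lpar True a \<Longrightarrow> gev a = 0" by (auto simp: lpar_def gev_def fun_eq_iff)

lemma god_odd: "lpar True a \<Longrightarrow> god a = a" by (auto simp: lpar_def god_def fun_eq_iff)

lemma gev_zero[simp]: "gev 0 = 0" by (auto simp: gev_def fun_eq_iff)

lemma god_zero[simp]: "god 0 = 0" by (auto simp: god_def fun_eq_iff)

lemma gev_gev: "gev (gev a) = gev a" by (auto simp: gev_def)

lemma god_god: "god (god a) = god a" by (auto simp: god_def)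

lemma gev_god_eq_0: "gev (god a) = 0" by (auto simp: gev_def god_def fun_eq_iff)

lemma god_gev_eq_0: "god (gev a) = 0" by (auto simp: gev_def god_def fun_eq_iff)

lemma Lam_gev: "a \<in> Lam \<Longrightarrow> gev a \<in> Lam"
  unfolding Lam_def gev_def by (auto intro: finite_subset[of _ "{S. a S \<noteq> 0}"])

lemma Lam_god: "a \<in> Lam \<Longrightarrow> god a \<in> Lam"
  unfolding Lam_def god_def by (auto intro: finite_subset[of _ "{S. a S \<noteq> 0}"])

lemma scal_one[simp]: "scal 1 a = a" by (simp add: scal_def)

lemma zero_on_infinite_gprod: "zero_on_infinite (gprod xs)"
  by (cases xs) (auto simp: gprod_def zero_on_infinite_gmul)

lemma gprod_Nil[simp]: "gprod [] = gconst 1" by (simp add: gprod_def)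

lemma gprod_Cons[simp]: "gprod (x # xs) = gmul x (gprod xs)" by (simp add: gprod_def)

lemma gprod_append: "gprod (xs @ ys) = gmul (gprod xs) (gprod ys)"
  by (induction xs) (auto simp: gmul_one_left zero_on_infinite_gprod gmul_assoc)

lemma lpar_gpow: "lpar False a \<Longrightarrow> lpar False (gpow a r)"
  by (induction r) (auto dest: lpar_gmul)

lemma gmul_commute_even:
  assumes "lpar False l" shows "gmul a l = gmul l a"
proof -
  have "gmul (gev a) l = gmul l (gev a)"
    using gmul_supercommute[OF lpar_gev assms] by (simp add: psign_def)
  moreover have "gmul (god a) l = gmul l (god a)"
    using gmul_supercommute[OF lpar_god assms] by (simp add: psign_def)
  ultimately show ?thesis using gev_add_god[of a]
    by (metis gmul_add_left gmul_add_right)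
qed

lemma gmul_commute_gev_gev: "gmul (gev a) (gev b) = gmul (gev b) (gev a)"
  using gmul_supercommute[OF lpar_gev[of b] lpar_gev[of a]] by (simp add: psign_def)

lemma gmul_commute_gev_god: "gmul (gev a) (god b) = gmul (god b) (gev a)"
  using gmul_supercommute[OF lpar_god[of b] lpar_gev[of a]] by (simp add: psign_def)

lemma gmul_commute_god_gev: "gmul (god a) (gev b) = gmul (gev b) (god a)"
  using gmul_supercommute[OF lpar_gev[of b] lpar_god[of a]] by (simp add: psign_def)

lemma gmul_anticommute_god_god: "gmul (god a) (god b) = - gmul (god b) (god a)"
  using gmul_supercommute[OF lpar_god[of b] lpar_god[of a]] by (simp add: psign_def scal_minus_one)

section \<open>Coordinates on \<open>M\<close> and \<open>M\<^sup>*\<close>\<close>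

definition mbasis :: "nat \<Rightarrow> mel" where
  "mbasis i = (\<lambda>j. if j = i then gconst 1 else 0)"

definition dcoord :: "nat \<Rightarrow> nat \<Rightarrow> dual" where
  "dcoord n i = (\<lambda>v. if v \<in> Mset n then v i else 0)"

lemma Mset_zero[simp]: "0 \<in> Mset n" by (simp add: Mset_def)

lemma Mset_add: "v \<in> Mset n \<Longrightarrow> w \<in> Mset n \<Longrightarrow> v + w \<in> Mset n"
  by (auto simp: Mset_def Lam_add)

lemma Mset_sum: "(\<And>x. x \<in> A \<Longrightarrow> f x \<in> Mset n) \<Longrightarrow> sum f A \<in> Mset n"
  by (rule sum_closed[where P = "\<lambda>v. v \<in> Mset n"]) (simp_all add: Mset_add)

lemma Mset_mright: "v \<in> Mset n \<Longrightarrow> \<mu> \<in> Lam \<Longrightarrow> mright v \<mu> \<in> Mset n"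
  by (auto simp: Mset_def mright_def Lam_gmul)

lemma Mset_mbasis: "i < n \<Longrightarrow> mbasis i \<in> Mset n"
  by (auto simp: Mset_def mbasis_def)

lemma Mset_Lam: "v \<in> Mset n \<Longrightarrow> v i \<in> Lam"
  by (cases "i < n") (auto simp: Mset_def)

lemma Mset_basis_expansion:
  assumes v: "v \<in> Mset n"
  shows "v = (\<Sum>i<n. mright (mbasis i) (v i))"
proof (rule ext)
  fix j
  have "(\<Sum>i<n. mright (mbasis i) (v i)) j = (\<Sum>i<n. gmul (mbasis i j) (v i))"
    by (simp add: sum_fun_apply mright_def)
  also have "\<dots> = (\<Sum>i<n. if i = j then gmul (gconst 1) (v j) else 0)"
    by (rule sum.cong) (auto simp: mbasis_def)
  also have "\<dots> = (if j < n then gmul (gconst 1) (v j) else 0)"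
    by (simp add: sum.delta)
  also have "\<dots> = v j" using v by (auto simp: Mset_def gmul_one_left Lam_zero_on_infinite)
  finally show "v j = (\<Sum>i<n. mright (mbasis i) (v i)) j" by simp
qed

lemma Dual_apply_outside: "T \<in> Dual n \<Longrightarrow> v \<notin> Mset n \<Longrightarrow> T v = 0" by (simp add: Dual_def)

lemma Dual_Lam: "T \<in> Dual n \<Longrightarrow> T v \<in> Lam"
  by (cases "v \<in> Mset n") (auto simp: Dual_def)

lemma Dual_additive: "T \<in> Dual n \<Longrightarrow> v \<in> Mset n \<Longrightarrow> w \<in> Mset n \<Longrightarrow> T (v + w) = T v + T w"
  by (simp add: Dual_def)

lemma Dual_right_linear: "T \<in> Dual n \<Longrightarrow> v \<in> Mset n \<Longrightarrow> \<mu> \<in> Lam \<Longrightarrow> T (mright v \<mu>) = gmul (T v) \<mu>"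
  by (simp add: Dual_def)

lemma Dual_apply_0: "T \<in> Dual n \<Longrightarrow> T 0 = 0"
  using Dual_additive[of T n 0 0] by simp

lemma Dual_apply_sum: "T \<in> Dual n \<Longrightarrow> (\<And>x. x \<in> A \<Longrightarrow> f x \<in> Mset n) \<Longrightarrow> T (sum f A) = (\<Sum>x\<in>A. T (f x))"
proof (induction A rule: infinite_finite_induct)
  case (infinite A) thus ?case using Dual_apply_0[of T n] by (metis sum.infinite)
next
  case empty thus ?case using Dual_apply_0[of T n] by (metis sum.empty)
next
  case (insert x F)
  have "T (sum f (insert x F)) = T (f x + sum f F)" by (simp only: sum.insert[OF insert(1,2)])
  also have "\<dots> = T (f x) + T (sum f F)"
    using insert by (intro Dual_additive Mset_sum) auto
  also have "\<dots> = T (f x) + (\<Sum>x\<in>F. T (f x))" using insert by (metis insertCI)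
  also have "\<dots> = (\<Sum>x\<in>insert x F. T (f x))" by (simp only: sum.insert[OF insert(1,2)])
  finally show ?case .
qed

lemma Dual_apply_expansion:
  assumes T: "T \<in> Dual n" and v: "v \<in> Mset n"
  shows "T v = (\<Sum>i<n. gmul (T (mbasis i)) (v i))"
proof -
  have "T v = T (\<Sum>i<n. mright (mbasis i) (v i))" using Mset_basis_expansion[OF v] by simp
  also have "\<dots> = (\<Sum>i<n. T (mright (mbasis i) (v i)))"
    using v by (intro Dual_apply_sum[OF T]) (auto intro: Mset_mright Mset_mbasis Mset_Lam)
  also have "\<dots> = (\<Sum>i<n. gmul (T (mbasis i)) (v i))"
    using v by (intro sum.cong) (auto intro: Dual_right_linear[OF T] Mset_mbasis Mset_Lam)
  finally show ?thesis .
qed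

lemma Dual_dcoord_expansion:
  assumes T: "T \<in> Dual n"
  shows "T = (\<Sum>i<n. dlmul n (T (mbasis i)) (dcoord n i))"
proof (rule ext)
  fix v
  show "T v = (\<Sum>i<n. dlmul n (T (mbasis i)) (dcoord n i)) v"
    using Dual_apply_expansion[OF T] Dual_apply_outside[OF T]
    by (cases "v \<in> Mset n") (auto simp: sum_fun_apply dlmul_def dcoord_def)
qed

lemma DualI:
  assumes "\<And>v. v \<notin> Mset n \<Longrightarrow> T v = 0" "\<And>v. v \<in> Mset n \<Longrightarrow> T v \<in> Lam"
    "\<And>v w. v \<in> Mset n \<Longrightarrow> w \<in> Mset n \<Longrightarrow> T (v + w) = T v + T w"
    "\<And>v \<mu>. v \<in> Mset n \<Longrightarrow> \<mu> \<in> Lam \<Longrightarrow> T (mright v \<mu>) = gmul (T v) \<mu>"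
  shows "T \<in> Dual n"
  using assms by (auto simp: Dual_def)

lemma Dual_dcoord: "dcoord n i \<in> Dual n"
proof (rule DualI)
  fix v \<mu> assume "v \<in> Mset n" "\<mu> \<in> Lam"
  thus "dcoord n i (mright v \<mu>) = gmul (dcoord n i v) \<mu>"
    using Mset_mright by (simp add: dcoord_def mright_def)
qed (simp_all add: dcoord_def Mset_Lam Mset_add)

lemma Dual_dlmul: "\<mu> \<in> Lam \<Longrightarrow> T \<in> Dual n \<Longrightarrow> dlmul n \<mu> T \<in> Dual n"
proof (rule DualI)
  fix v w assume "T \<in> Dual n" "v \<in> Mset n" "w \<in> Mset n"
  thus "dlmul n \<mu> T (v + w) = dlmul n \<mu> T v + dlmul n \<mu> T w"
    using Mset_add[of v n w] by (simp add: dlmul_def Dual_additive[of T n] gmul_add_right)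
next
  fix v \<nu> assume "T \<in> Dual n" "v \<in> Mset n" "\<nu> \<in> Lam"
  thus "dlmul n \<mu> T (mright v \<nu>) = gmul (dlmul n \<mu> T v) \<nu>"
    using Mset_mright[of v n \<nu>] by (simp add: dlmul_def Dual_right_linear[of T n] gmul_assoc)
qed (simp_all add: dlmul_def Lam_gmul Dual_Lam)

lemma Dual_add: "T \<in> Dual n \<Longrightarrow> S \<in> Dual n \<Longrightarrow> T + S \<in> Dual n"
  by (rule DualI) (simp_all add: Dual_apply_outside[of T n] Dual_apply_outside[of S n] Dual_additive[of T n] Dual_additive[of S n]
     Dual_right_linear[of T n] Dual_right_linear[of S n] Lam_add Dual_Lam gmul_add_left)

lemma Dual_zero: "(0::dual) \<in> Dual n"
  by (rule DualI) auto

lemma Dual_sum_closed: "(\<And>x. x \<in> A \<Longrightarrow> f x \<in> Dual n) \<Longrightarrow> sum f A \<in> Dual n"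
  by (rule sum_closed[where P = "\<lambda>T. T \<in> Dual n"]) (simp_all add: Dual_add Dual_zero)

lemma dcoord_apply: "v \<in> Mset n \<Longrightarrow> dcoord n i v = v i" by (simp add: dcoord_def)

lemma M0_Mset: "v \<in> M0 n par \<Longrightarrow> v \<in> Mset n" by (simp add: M0_def)

lemma M0_lpar_coord: "v \<in> M0 n par \<Longrightarrow> lpar (par i) (v i)"
  by (cases "i < n") (auto simp: M0_def mpar_def Mset_def)

lemma mevp_M0: "v \<in> M0 n par \<Longrightarrow> mevp par v = v"
proof (rule ext)
  fix i assume "v \<in> M0 n par"
  thus "mevp par v i = v i" using M0_lpar_coord[of v n par i]
    by (cases "par i") (simp_all add: mevp_def god_odd gev_even)
qed

lemma modp_M0: "v \<in> M0 n par \<Longrightarrow> modp par v = 0"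
proof (rule ext)
  fix i assume "v \<in> M0 n par"
  thus "modp par v i = 0 i" using M0_lpar_coord[of v n par i]
    by (cases "par i") (simp_all add: modp_def god_even gev_odd)
qed

lemma devp_M0: "T \<in> Dual n \<Longrightarrow> v \<in> M0 n par \<Longrightarrow> devp n par T v = gev (T v)"
  using Dual_apply_0[of T n] by (simp add: devp_def mevp_M0 modp_M0 M0_Mset)

lemma dright_apply_M0:
  assumes T: "T \<in> Dual n" and v: "v \<in> M0 n par"
  shows "dright n par T \<mu> v = gmul (T v) \<mu>"
proof -
  let ?t = "T v"
  have "dright n par T \<mu> v = gmul (gev \<mu>) ?t + gmul (god \<mu>) (gev ?t - (?t - gev ?t))"
    using devp_M0[OF T v] M0_Mset[OF v] by (simp add: dright_def)
  also have "gev ?t - (?t - gev ?t) = gev ?t - god ?t"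
    using gev_add_god[of ?t] by (metis add_diff_cancel_left')
  finally have 1: "dright n par T \<mu> v = gmul (gev \<mu>) ?t + gmul (god \<mu>) (gev ?t - god ?t)" .
  have "gmul ?t \<mu> = gmul (gev ?t + god ?t) (gev \<mu> + god \<mu>)" by (simp add: gev_add_god)
  also have "\<dots> = gmul (gev ?t) (gev \<mu>) + gmul (gev ?t) (god \<mu>) + (gmul (god ?t) (gev \<mu>) + gmul (god ?t) (god \<mu>))"
    by (simp add: gmul_add_left gmul_add_right)
  also have "\<dots> = gmul (gev \<mu>) (gev ?t) + gmul (god \<mu>) (gev ?t) + (gmul (gev \<mu>) (god ?t) - gmul (god \<mu>) (god ?t))"
    by (simp add: gmul_commute_gev_gev[of ?t] gmul_commute_gev_god[of ?t] gmul_commute_god_gev[of ?t] gmul_anticommute_god_god[of ?t])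
  also have "\<dots> = gmul (gev \<mu>) (gev ?t + god ?t) + gmul (god \<mu>) (gev ?t - god ?t)"
    by (simp add: gmul_add_right gmul_diff_right)
  finally show ?thesis using 1 by (simp add: gev_add_god)
qed

definition parity_twist :: "(nat \<Rightarrow> bool) \<Rightarrow> nat \<Rightarrow> lam \<Rightarrow> lam" where
  "parity_twist par i \<mu> = (if par i then gev \<mu> - god \<mu> else \<mu>)"

lemma Lam_parity_twist: "\<mu> \<in> Lam \<Longrightarrow> parity_twist par i \<mu> \<in> Lam"
  by (simp add: parity_twist_def Lam_diff Lam_gev Lam_god)

lemma Mset_mevp: "v \<in> Mset n \<Longrightarrow> mevp par v \<in> Mset n"
  by (auto simp: Mset_def mevp_def Lam_gev Lam_god)

lemma Mset_modp: "v \<in> Mset n \<Longrightarrow> modp par v \<in> Mset n"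
  by (auto simp: Mset_def modp_def Lam_gev Lam_god)

lemma dright_dcoord: "dright n par (dcoord n i) \<mu> = dlmul n (parity_twist par i \<mu>) (dcoord n i)"
proof (rule ext)
  fix v
  show "dright n par (dcoord n i) \<mu> v = dlmul n (parity_twist par i \<mu>) (dcoord n i) v"
  proof (cases "v \<in> Mset n")
    case True
    have dv: "devp n par (dcoord n i) v = (if par i then 0 else v i)"
      using True Mset_mevp[OF True, of par] Mset_modp[OF True, of par]
      by (auto simp: devp_def dcoord_def mevp_def modp_def gev_gev god_god gev_god_eq_0 god_gev_eq_0 gev_add_god)
    show ?thesis
    proof (cases "par i")
      case p: True
      thus ?thesis using True dv
        by (simp add: dright_def dlmul_def dcoord_def parity_twist_def gmul_diff_left gmul_uminus_right)
    next
      case p: False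
      have "gmul (gev \<mu>) (v i) + gmul (god \<mu>) (v i) = gmul \<mu> (v i)"
        by (simp add: gmul_add_left[symmetric] gev_add_god)
      thus ?thesis using True dv p
        by (simp add: dright_def dlmul_def dcoord_def parity_twist_def)
    qed
  qed (simp add: dright_def dlmul_def)
qed

lemma mleft_even_eq_mright:
  assumes "lpar False l" shows "mleft par l v = mright v l"
  using assms by (auto simp: mleft_def mright_def fun_eq_iff gev_even god_even gmul_commute_even)

lemma dpar_dcoord: "dpar n par (par i) (dcoord n i)"
  unfolding dpar_def
proof (intro allI impI)
  fix e v assume "v \<in> Mset n" "mpar n par e v"
  thus "lpar (e \<noteq> par i) (dcoord n i v)"
    by (cases "i < n") (auto simp: dcoord_def mpar_def Mset_def)
qed

lemma dpar_apply_M0: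
  assumes a: "dpar n par d u" and b: "v \<in> M0 n par" shows "lpar d (u v)"
proof -
  have "v \<in> Mset n" "mpar n par False v" using b by (auto simp: M0_def)
  with a have "lpar (False \<noteq> d) (u v)" unfolding dpar_def by blast
  thus ?thesis by simp
qed

section \<open>Evaluation of formal tensors\<close>

definition eval_word :: "dual list \<Rightarrow> mel \<Rightarrow> lam" where
  "eval_word us v = gprod (map (\<lambda>u. u v) us)"

definition finite_tsupp :: "tel \<Rightarrow> bool" where
  "finite_tsupp x \<longleftrightarrow> finite {us. x us \<noteq> 0}"

lemma Fmap_eval_word: "Fmap x v = (\<Sum>us\<in>{us. x us \<noteq> 0}. gmul (x us) (eval_word us v))"
  by (simp add: Fmap_def eval_word_def)

lemma Fmap_eq_sum_superset:
  assumes "finite A" "{us. x us \<noteq> 0} \<subseteq> A"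
  shows "Fmap x v = (\<Sum>us\<in>A. gmul (x us) (eval_word us v))"
  unfolding Fmap_eval_word using assms by (intro sum.mono_neutral_left) auto

lemma finite_tsupp_add: "finite_tsupp x \<Longrightarrow> finite_tsupp y \<Longrightarrow> finite_tsupp (x + y)"
  unfolding finite_tsupp_def by (rule finite_subset[of _ "{us. x us \<noteq> 0} \<union> {us. y us \<noteq> 0}"]) auto

lemma finite_tsupp_uminus: "finite_tsupp x \<Longrightarrow> finite_tsupp (- x)"
  unfolding finite_tsupp_def by simp

lemma finite_tsupp_diff: "finite_tsupp x \<Longrightarrow> finite_tsupp y \<Longrightarrow> finite_tsupp (x - y)"
  unfolding finite_tsupp_def by (rule finite_subset[of _ "{us. x us \<noteq> 0} \<union> {us. y us \<noteq> 0}"]) auto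

lemma finite_tsupp_zero[simp]: "finite_tsupp 0" by (simp add: finite_tsupp_def)

lemma finite_tsupp_fsingle[simp]: "finite_tsupp (fsingle c us)"
  unfolding finite_tsupp_def fsingle_def by (rule finite_subset[of _ "{us}"]) auto

lemma finite_tsupp_flmul: "finite_tsupp x \<Longrightarrow> finite_tsupp (flmul l x)"
  unfolding finite_tsupp_def flmul_def by (rule finite_subset[of _ "{us. x us \<noteq> 0}"]) auto

lemma finite_tsupp_sum: "(\<And>j. j \<in> J \<Longrightarrow> finite_tsupp (f j)) \<Longrightarrow> finite_tsupp (sum f J)"
  by (rule sum_closed[where P = finite_tsupp]) (simp_all add: finite_tsupp_add)

lemma finite_tsupp_FT: "x \<in> FT n \<Longrightarrow> finite_tsupp x" by (simp add: FT_def finite_tsupp_def)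

lemma Fmap_add:
  assumes "finite_tsupp x" "finite_tsupp y" shows "Fmap (x + y) v = Fmap x v + Fmap y v"
proof -
  let ?A = "{us. x us \<noteq> 0} \<union> {us. y us \<noteq> 0}"
  have f: "finite ?A" using assms by (simp add: finite_tsupp_def)
  have "Fmap (x + y) v = (\<Sum>us\<in>?A. gmul ((x + y) us) (eval_word us v))"
    by (rule Fmap_eq_sum_superset[OF f]) auto
  also have "\<dots> = (\<Sum>us\<in>?A. gmul (x us) (eval_word us v)) + (\<Sum>us\<in>?A. gmul (y us) (eval_word us v))"
    by (simp add: gmul_add_left sum.distrib)
  also have "\<dots> = Fmap x v + Fmap y v"
  proof -
    have "Fmap x v = (\<Sum>us\<in>?A. gmul (x us) (eval_word us v))" by (rule Fmap_eq_sum_superset[OF f]) auto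
    moreover have "Fmap y v = (\<Sum>us\<in>?A. gmul (y us) (eval_word us v))" by (rule Fmap_eq_sum_superset[OF f]) auto
    ultimately show ?thesis by simp
  qed
  finally show ?thesis .
qed

lemma Fmap_zero[simp]: "Fmap 0 v = 0" by (simp add: Fmap_def)

lemma Fmap_uminus:
  assumes "finite_tsupp x" shows "Fmap (- x) v = - Fmap x v"
proof -
  have "Fmap (- x + x) v = Fmap (- x) v + Fmap x v" using assms by (intro Fmap_add finite_tsupp_uminus)
  moreover have "Fmap (- x + x) v = 0" by (simp only: add.left_inverse Fmap_zero)
  ultimately have "Fmap (- x) v + Fmap x v = 0" by simp
  thus ?thesis by (rule eq_neg_iff_add_eq_0[THEN iffD2])
qed

lemma Fmap_diff:
  assumes "finite_tsupp x" "finite_tsupp y" shows "Fmap (x - y) v = Fmap x v - Fmap y v"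
  using Fmap_add[OF assms(1) finite_tsupp_uminus[OF assms(2)]] Fmap_uminus[OF assms(2)] by simp

lemma Fmap_fsingle: "Fmap (fsingle c us) v = gmul c (eval_word us v)"
proof -
  have "Fmap (fsingle c us) v = (\<Sum>ws\<in>{us}. gmul (fsingle c us ws) (eval_word ws v))"
    by (rule Fmap_eq_sum_superset) (auto simp: fsingle_def)
  thus ?thesis by (simp add: fsingle_def)
qed

lemma Fmap_sum:
  "(\<And>j. j \<in> J \<Longrightarrow> finite_tsupp (f j)) \<Longrightarrow> Fmap (sum f J) v = (\<Sum>j\<in>J. Fmap (f j) v)"
proof (induction J rule: infinite_finite_induct)
  case (insert x F)
  have "Fmap (sum f (insert x F)) v = Fmap (f x + sum f F) v" by (simp only: sum.insert[OF insert(1,2)])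
  also have "\<dots> = Fmap (f x) v + Fmap (sum f F) v"
    using insert by (intro Fmap_add finite_tsupp_sum) auto
  also have "\<dots> = Fmap (f x) v + (\<Sum>j\<in>F. Fmap (f j) v)" using insert by (metis insertCI)
  also have "\<dots> = (\<Sum>j\<in>insert x F. Fmap (f j) v)" by (simp only: sum.insert[OF insert(1,2)])
  finally show ?case .
qed (simp_all add: zero_fun_def[symmetric])

lemma Fmap_flmul:
  assumes "finite_tsupp x" shows "Fmap (flmul l x) v = gmul l (Fmap x v)"
proof -
  let ?A = "{us. x us \<noteq> 0}"
  have f: "finite ?A" using assms by (simp add: finite_tsupp_def)
  have "Fmap (flmul l x) v = (\<Sum>us\<in>?A. gmul (flmul l x us) (eval_word us v))"
    by (rule Fmap_eq_sum_superset[OF f]) (auto simp: flmul_def)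
  also have "\<dots> = gmul l (Fmap x v)"
    by (simp add: Fmap_eval_word gmul_sum_right flmul_def gmul_assoc)
  finally show ?thesis .
qed

lemma eval_word_append: "eval_word (a @ b) v = gmul (eval_word a v) (eval_word b v)"
  by (simp add: eval_word_def gprod_append)

lemma eval_word_Cons: "eval_word (u # b) v = gmul (u v) (eval_word b v)"
  by (simp add: eval_word_def)

lemma eval_word_Nil: "eval_word [] v = gconst 1" by (simp add: eval_word_def)

lemma zero_on_infinite_eval_word: "zero_on_infinite (eval_word us v)" by (simp add: eval_word_def zero_on_infinite_gprod)

lemma eval_word_dcoord: "v \<in> Mset n \<Longrightarrow> eval_word (map (dcoord n) w) v = gprod (map v w)"
  by (simp add: eval_word_def comp_def dcoord_apply)

lemma fsingle_zero[simp]: "fsingle 0 us = 0" by (auto simp: fsingle_def fun_eq_iff)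

lemma fsingle_add: "fsingle a us + fsingle b us = fsingle (a + b) us"
  by (auto simp: fsingle_def fun_eq_iff)

lemma fsingle_diff: "fsingle a us - fsingle b us = fsingle (a - b) us"
  by (auto simp: fsingle_def fun_eq_iff)

lemma flmul_fsingle: "flmul l (fsingle c us) = fsingle (gmul l c) us"
  by (auto simp: fsingle_def flmul_def fun_eq_iff)

lemma flmul_diff: "flmul l (x - y) = flmul l x - flmul l y"
  by (auto simp: flmul_def fun_eq_iff gmul_diff_right)

section \<open>The relations vanish under evaluation\<close>

lemma finite_tsupp_Krel: "x \<in> Krel n par \<Longrightarrow> finite_tsupp x"
  by (erule Krel.induct[of x n par finite_tsupp])
     (simp_all only: finite_tsupp_add finite_tsupp_flmul finite_tsupp_diff finite_tsupp_fsingle finite_tsupp_zero)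

lemma Lam_fsingle: "c \<in> Lam \<Longrightarrow> fsingle c us ws \<in> Lam"
  by (simp add: fsingle_def)

lemma Krel_Lam: "x \<in> Krel n par \<Longrightarrow> x us \<in> Lam"
  by (erule Krel.induct[of x n par "\<lambda>x. x us \<in> Lam"])
     (simp_all only: plus_fun_apply minus_apply zero_fun_apply flmul_def Lam_zero Lam_add Lam_diff
       Lam_gmul Lam_fsingle Lam_gconst)

lemma eval_word_middle: "eval_word (a @ [x] @ b) v = gmul (eval_word a v) (gmul (x v) (eval_word b v))"
  by (simp only: eval_word_append eval_word_Cons append_Cons append_Nil)

lemma eval_word_middle2: "eval_word (a @ [x, y] @ b) v = gmul (eval_word a v) (gmul (x v) (gmul (y v) (eval_word b v)))"
  by (simp only: eval_word_append eval_word_Cons append_Cons append_Nil)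

lemma Fmap_fsingle_one: "Fmap (fsingle (gconst 1) us) v = eval_word us v"
  by (simp only: Fmap_fsingle gmul_one_left[OF zero_on_infinite_eval_word])

lemma eval_word_swap:
  assumes "dpar n par d u" "dpar n par e w" "v \<in> M0 n par"
  shows "eval_word (a @ [u, w] @ b) v = gmul (gconst (psign d e)) (eval_word (a @ [w, u] @ b) v)"
proof -
  have pu: "lpar d (u v)" and pw: "lpar e (w v)" using dpar_apply_M0 assms by auto
  have c: "gmul (u v) (w v) = scal (psign d e) (gmul (w v) (u v))"
    using gmul_supercommute[OF pw pu] by (simp add: psign_def conj_commute)
  have "gmul (u v) (gmul (w v) (eval_word b v)) = scal (psign d e) (gmul (w v) (gmul (u v) (eval_word b v)))"
    by (simp only: gmul_assoc[symmetric] c gmul_scal_left)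
  thus ?thesis
    by (simp only: eval_word_middle2 gmul_gconst_left_scal[OF zero_on_infinite_gmul] gmul_scal_right)
qed

lemma eval_word_add_letter:
  "eval_word (a @ [u + u'] @ b) v = eval_word (a @ [u] @ b) v + eval_word (a @ [u'] @ b) v"
  by (simp only: eval_word_middle plus_fun_apply gmul_add_left gmul_add_right)

lemma eval_word_front:
  assumes "v \<in> M0 n par"
  shows "eval_word (dlmul n \<mu> u # b) v = gmul \<mu> (eval_word (u # b) v)"
  using M0_Mset[OF assms] by (simp add: dlmul_def eval_word_Cons gmul_assoc)

lemma eval_word_balance:
  assumes "u \<in> Dual n" "v \<in> M0 n par"
  shows "eval_word (a @ [dright n par u \<mu>, w] @ b) v = eval_word (a @ [u, dlmul n \<mu> w] @ b) v"
proof -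
  have "dlmul n \<mu> w v = gmul \<mu> (w v)" using M0_Mset[OF assms(2)] by (simp add: dlmul_def)
  thus ?thesis by (simp only: eval_word_middle2 dright_apply_M0[OF assms] gmul_assoc)
qed

lemma Fmap_Krel_eq_0:
  assumes "x \<in> Krel n par" "v \<in> M0 n par" shows "Fmap x v = 0"
proof (rule Krel.induct[of x n par "\<lambda>x. Fmap x v = 0", OF assms(1)])
  show "Fmap 0 v = 0" by simp
next
  fix x y assume "x \<in> Krel n par" "Fmap x v = 0" "y \<in> Krel n par" "Fmap y v = 0"
  thus "Fmap (x + y) v = 0" by (simp add: Fmap_add finite_tsupp_Krel)
next
  fix l x assume "l \<in> Lam" "x \<in> Krel n par" "Fmap x v = 0"
  thus "Fmap (flmul l x) v = 0" by (simp add: Fmap_flmul finite_tsupp_Krel)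
next
  fix a b u u'
  show "Fmap (fsingle (gconst 1) (a @ [u + u'] @ b) - fsingle (gconst 1) (a @ [u] @ b) -
           fsingle (gconst 1) (a @ [u'] @ b)) v = 0"
    by (simp only: Fmap_diff finite_tsupp_diff finite_tsupp_fsingle Fmap_fsingle_one
        eval_word_add_letter) simp
next
  fix \<mu> u b
  show "Fmap (fsingle \<mu> (u # b) - fsingle (gconst 1) (dlmul n \<mu> u # b)) v = 0"
    by (simp only: Fmap_diff finite_tsupp_fsingle Fmap_fsingle_one Fmap_fsingle
        eval_word_front[OF assms(2)] gmul_one_left[OF zero_on_infinite_gmul] diff_self)
next
  fix \<mu> a b u w
  assume "u \<in> Dual n"
  thus "Fmap (fsingle (gconst 1) (a @ [dright n par u \<mu>, w] @ b) -
           fsingle (gconst 1) (a @ [u, dlmul n \<mu> w] @ b)) v = 0"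
    by (simp only: Fmap_diff finite_tsupp_fsingle Fmap_fsingle_one eval_word_balance[OF _ assms(2)]
        diff_self)
next
  fix a b u w d e
  assume "dpar n par d u" "dpar n par e w"
  hence "eval_word (a @ [u, w] @ b) v = gmul (gconst (psign d e)) (eval_word (a @ [w, u] @ b) v)"
    using assms(2) by (rule eval_word_swap)
  thus "Fmap (fsingle (gconst 1) (a @ [u, w] @ b) -
           fsingle (gconst (psign d e)) (a @ [w, u] @ b)) v = 0"
    by (simp only: Fmap_diff finite_tsupp_fsingle Fmap_fsingle_one Fmap_fsingle
        gmul_one_left[OF zero_on_infinite_gmul] diff_self)
qed

section \<open>Normal forms modulo the relations\<close>

lemma Krel_uminus: "x \<in> Krel n par \<Longrightarrow> - x \<in> Krel n par"
proof -
  assume x: "x \<in> Krel n par"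
  have "flmul (gconst (-1)) x = - x"
    using Krel_Lam[OF x] by (auto simp: flmul_def fun_eq_iff gmul_gconst_left_scal Lam_zero_on_infinite scal_def)
  thus ?thesis using Krel.lmul[OF Lam_gconst x, of "-1"] by simp
qed

lemma Krel_sum: "(\<And>j. j \<in> J \<Longrightarrow> f j \<in> Krel n par) \<Longrightarrow> sum f J \<in> Krel n par"
  by (rule sum_closed[where P = "\<lambda>x. x \<in> Krel n par"]) (simp_all add: Krel.zero Krel.add)

lemma Krel_subst: "x \<in> Krel n par \<Longrightarrow> x = y \<Longrightarrow> y \<in> Krel n par" by simp

lemma Krel_diff_trans: "x - y \<in> Krel n par \<Longrightarrow> y - z \<in> Krel n par \<Longrightarrow> x - z \<in> Krel n par"
  using Krel.add[of "x - y" n par "y - z"] by (simp add: algebra_simps)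

lemma Krel_diff_sym: "x - y \<in> Krel n par \<Longrightarrow> y - x \<in> Krel n par"
  using Krel_uminus[of "x - y" n par] by (simp add: algebra_simps)

lemma Krel_diff_refl: "x - x \<in> Krel n par"
  using Krel.zero by simp

lemma Krel_diff_add: "x - x' \<in> Krel n par \<Longrightarrow> y - y' \<in> Krel n par \<Longrightarrow> (x + y) - (x' + y') \<in> Krel n par"
  using Krel.add[of "x - x'" n par "y - y'"] by (simp add: algebra_simps)

lemma Krel_diff_sum:
  assumes "\<And>j. j \<in> J \<Longrightarrow> f j - g j \<in> Krel n par"
  shows "sum f J - sum g J \<in> Krel n par"
proof -
  have "sum f J - sum g J = (\<Sum>j\<in>J. f j - g j)" by (simp add: sum_subtractf)
  thus ?thesis using Krel_sum[of J "\<lambda>j. f j - g j" n par] assms by simp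
qed

lemma Krel_diff_flmul: "x - y \<in> Krel n par \<Longrightarrow> l \<in> Lam \<Longrightarrow> flmul l x - flmul l y \<in> Krel n par"
  using Krel.lmul[of l "x - y" n par] by (simp add: flmul_diff)

lemma flmul_fsingle_one: "l \<in> Lam \<Longrightarrow> flmul l (fsingle (gconst 1) us) = fsingle l us"
  by (simp add: flmul_fsingle gmul_one_right Lam_zero_on_infinite)

lemma Krel_fsingle_zero_factor:
  assumes "set a \<subseteq> Dual n" "set b \<subseteq> Dual n" "l \<in> Lam"
  shows "fsingle l (a @ [0] @ b) \<in> Krel n par"
proof -
  have "fsingle (gconst 1) (a @ [0 + 0] @ b) - fsingle (gconst 1) (a @ [0] @ b)
       - fsingle (gconst 1) (a @ [0] @ b) \<in> Krel n par"
    using assms Dual_zero by (intro Krel.additive) auto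
  hence "- fsingle (gconst 1) (a @ [0] @ b) \<in> Krel n par"
    by (rule Krel_subst) (simp only: add_0 diff_self diff_0)
  hence "fsingle (gconst 1) (a @ [0] @ b) \<in> Krel n par"
    by (rule Krel_subst[OF Krel_uminus]) (simp only: minus_minus)
  from Krel.lmul[OF assms(3) this] show ?thesis
    by (rule Krel_subst) (simp only: flmul_fsingle_one assms(3))
qed

lemma Krel_fsingle_sum_factor:
  assumes "finite J" "\<And>j. j \<in> J \<Longrightarrow> f j \<in> Dual n" "set a \<subseteq> Dual n" "set b \<subseteq> Dual n" "l \<in> Lam"
  shows "fsingle l (a @ [sum f J] @ b) - (\<Sum>j\<in>J. fsingle l (a @ [f j] @ b)) \<in> Krel n par"
  using assms(1,2)
proof (induction J rule: finite_induct)
  case empty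
  show ?case using Krel_fsingle_zero_factor[OF assms(3,4,5)] by (rule Krel_subst) (simp only: sum.empty diff_zero)
next
  case (insert j F)
  let ?S = "sum f F"
  have SD: "?S \<in> Dual n" using insert by (intro Dual_sum_closed) auto
  have "fsingle (gconst 1) (a @ [f j + ?S] @ b) - fsingle (gconst 1) (a @ [f j] @ b)
       - fsingle (gconst 1) (a @ [?S] @ b) \<in> Krel n par"
    using assms insert SD by (intro Krel.additive) auto
  from Krel.lmul[OF assms(5) this]
  have 1: "fsingle l (a @ [f j + ?S] @ b) - fsingle l (a @ [f j] @ b)
       - fsingle l (a @ [?S] @ b) \<in> Krel n par"
    by (rule Krel_subst) (simp only: assms(5) flmul_diff flmul_fsingle_one)
  have 2: "fsingle l (a @ [?S] @ b) - (\<Sum>j\<in>F. fsingle l (a @ [f j] @ b)) \<in> Krel n par"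
    by (rule insert.IH) (simp add: insert.prems)
  have "fsingle l (a @ [f j + ?S] @ b) - (fsingle l (a @ [f j] @ b) + (\<Sum>j\<in>F. fsingle l (a @ [f j] @ b)))
      = (fsingle l (a @ [f j + ?S] @ b) - fsingle l (a @ [f j] @ b) - fsingle l (a @ [?S] @ b))
        + (fsingle l (a @ [?S] @ b) - (\<Sum>j\<in>F. fsingle l (a @ [f j] @ b)))"
    by (simp add: algebra_simps)
  hence "fsingle l (a @ [f j + ?S] @ b) - (fsingle l (a @ [f j] @ b) + (\<Sum>j\<in>F. fsingle l (a @ [f j] @ b)))
     \<in> Krel n par" using Krel.add[OF 1 2] by (simp only:)
  thus ?case by (simp only: sum.insert[OF insert(1,2)])
qed

lemma set_map_dcoord: "set (map (dcoord n) is) \<subseteq> Dual n"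
  using Dual_dcoord by auto

text \<open>The coefficient is pushed to the front letter by letter with the balance relation,
  picking up a sign on its odd part at each odd letter, and is absorbed by the front relation.\<close>

lemma Krel_dlmul_dcoord:
  assumes "set b \<subseteq> Dual n" "c \<in> Lam" "l \<in> Lam"
  shows "\<exists>l'\<in>Lam. fsingle l (map (dcoord n) is @ [dlmul n c (dcoord n j)] @ b)
                 - fsingle l' (map (dcoord n) is @ [dcoord n j] @ b) \<in> Krel n par"
  using assms
proof (induction "is" arbitrary: j c b l rule: rev_induct)
  case Nil
  have "fsingle c (dcoord n j # b) - fsingle (gconst 1) (dlmul n c (dcoord n j) # b) \<in> Krel n par"
    using Nil Dual_dcoord by (intro Krel.front) auto
  from Krel_diff_flmul[OF this Nil(3)]
  have "fsingle (gmul l c) (dcoord n j # b) - fsingle l (dlmul n c (dcoord n j) # b) \<in> Krel n par"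
    by (rule Krel_subst) (simp only: Nil(3) flmul_diff flmul_fsingle gmul_one_right[OF Lam_zero_on_infinite[OF Nil(3)]])
  hence "fsingle l (map (dcoord n) [] @ [dlmul n c (dcoord n j)] @ b) - fsingle (gmul l c) (map (dcoord n) [] @ [dcoord n j] @ b) \<in> Krel n par"
    by (rule Krel_subst[OF Krel_diff_sym]) simp
  from this Lam_gmul[OF Nil(3) Nil(2)] show ?case by (rule bexI)
next
  case (snoc k "is")
  let ?a = "map (dcoord n) is"
  have "fsingle (gconst 1) (?a @ [dright n par (dcoord n k) c, dcoord n j] @ b)
      - fsingle (gconst 1) (?a @ [dcoord n k, dlmul n c (dcoord n j)] @ b) \<in> Krel n par"
    using snoc Dual_dcoord set_map_dcoord by (intro Krel.balance) auto
  from Krel_diff_sym[OF Krel_diff_flmul[OF this snoc(4)]]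
  have 1: "fsingle l (?a @ [dcoord n k, dlmul n c (dcoord n j)] @ b)
      - fsingle l (?a @ [dlmul n (parity_twist par k c) (dcoord n k)] @ (dcoord n j # b)) \<in> Krel n par"
    by (rule Krel_subst) (simp add: snoc(4) flmul_fsingle_one dright_dcoord)
  have h: "set (dcoord n j # b) \<subseteq> Dual n" using snoc(2) Dual_dcoord by auto
  obtain l' where l': "l' \<in> Lam" "fsingle l (?a @ [dlmul n (parity_twist par k c) (dcoord n k)] @ (dcoord n j # b))
      - fsingle l' (?a @ [dcoord n k] @ (dcoord n j # b)) \<in> Krel n par"
    using snoc.IH[OF h Lam_parity_twist[OF snoc(3)] snoc(4)] by blast
  have "fsingle l (map (dcoord n) (is @ [k]) @ [dlmul n c (dcoord n j)] @ b)
                 - fsingle l' (map (dcoord n) (is @ [k]) @ [dcoord n j] @ b) \<in> Krel n par"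
    using Krel_diff_trans[OF 1 l'(2)] by (rule Krel_subst) simp
  thus ?case using l'(1) by blast
qed

definition coord_comb :: "nat \<Rightarrow> nat list set \<Rightarrow> (nat list \<Rightarrow> lam) \<Rightarrow> tel" where
  "coord_comb n W C = (\<Sum>w\<in>W. fsingle (C w) (map (dcoord n) w))"

definition coord_words :: "nat \<Rightarrow> nat \<Rightarrow> nat list set" where
  "coord_words n r = {w. set w \<subseteq> {..<n} \<and> length w = r}"

lemma finite_coord_words: "finite (coord_words n r)"
  unfolding coord_words_def by (rule finite_lists_length_eq) simp

lemma fsingle_sum: "fsingle (sum f J) us = (\<Sum>j\<in>J. fsingle (f j) us)"
  by (auto simp: fsingle_def sum_fun_apply fun_eq_iff)

lemma coord_comb_sum: "coord_comb n W (\<lambda>w. \<Sum>j\<in>J. C j w) = (\<Sum>j\<in>J. coord_comb n W (C j))"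
  unfolding coord_comb_def by (simp add: fsingle_sum sum.swap[of _ J])

lemma Fmap_coord_comb: "v \<in> Mset n \<Longrightarrow> Fmap (coord_comb n W C) v = (\<Sum>w\<in>W. gmul (C w) (gprod (map v w)))"
  unfolding coord_comb_def by (simp add: Fmap_sum Fmap_fsingle eval_word_dcoord)

lemma Krel_expand_letter:
  assumes "u \<in> Dual n" "set us \<subseteq> Dual n" "l \<in> Lam"
  shows "\<exists>L. (\<forall>j. L j \<in> Lam) \<and> fsingle l (map (dcoord n) is @ [u] @ us)
     - (\<Sum>j<n. fsingle (L j) (map (dcoord n) is @ [dcoord n j] @ us)) \<in> Krel n par"
proof -
  let ?a = "map (dcoord n) is"
  define c where "c j = u (mbasis j)" for j
  have cL: "c j \<in> Lam" for j using Dual_Lam[OF assms(1)] by (simp add: c_def)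
  have ue: "u = (\<Sum>j<n. dlmul n (c j) (dcoord n j))"
    using Dual_dcoord_expansion[OF assms(1)] by (simp add: c_def)
  have 1: "fsingle l (?a @ [u] @ us)
      - (\<Sum>j<n. fsingle l (?a @ [dlmul n (c j) (dcoord n j)] @ us)) \<in> Krel n par"
    using assms cL Dual_dcoord set_map_dcoord
    by (subst (1) ue, intro Krel_fsingle_sum_factor) (auto intro: Dual_dlmul)
  have "\<forall>j. \<exists>l'\<in>Lam. fsingle l (?a @ [dlmul n (c j) (dcoord n j)] @ us)
                 - fsingle l' (?a @ [dcoord n j] @ us) \<in> Krel n par"
    using Krel_dlmul_dcoord[OF assms(2) cL assms(3)] by blast
  then obtain L where L: "\<And>j. L j \<in> Lam" "\<And>j. fsingle l (?a @ [dlmul n (c j) (dcoord n j)] @ us)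
                 - fsingle (L j) (?a @ [dcoord n j] @ us) \<in> Krel n par"
    by metis
  have "fsingle l (?a @ [u] @ us) - (\<Sum>j<n. fsingle (L j) (?a @ [dcoord n j] @ us)) \<in> Krel n par"
    using Krel_diff_trans[OF 1 Krel_diff_sum[OF L(2)]] .
  with L(1) show ?thesis by blast
qed

lemma Krel_expand_dcoords:
  assumes "set us \<subseteq> Dual n" "set is \<subseteq> {..<n}" "l \<in> Lam"
  shows "\<exists>C. (\<forall>w. C w \<in> Lam) \<and>
     fsingle l (map (dcoord n) is @ us) - coord_comb n (coord_words n (length is + length us)) C \<in> Krel n par"
  using assms
proof (induction us arbitrary: "is" l)
  case Nil
  let ?C = "\<lambda>w. if w = is then l else 0"
  have "is \<in> coord_words n (length is)" using Nil by (auto simp: coord_words_def)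
  hence "coord_comb n (coord_words n (length is)) ?C = fsingle l (map (dcoord n) is)"
    unfolding coord_comb_def using finite_coord_words
    by (simp add: if_distrib[of "\<lambda>c. fsingle c _"] cong: if_cong)
  moreover have "\<forall>w. ?C w \<in> Lam" using Nil by auto
  ultimately show ?case
    by (intro exI[of _ ?C]) (simp only: append_Nil2 list.size(3) add_0_right diff_self Krel.zero simp_thms)
next
  case (Cons u us)
  let ?a = "map (dcoord n) is" and ?W = "coord_words n (length is + length (u # us))"
  have uD: "u \<in> Dual n" and usD: "set us \<subseteq> Dual n" using Cons.prems(1) by auto
  obtain L where L: "\<And>j. L j \<in> Lam"
    "fsingle l (?a @ [u] @ us) - (\<Sum>j<n. fsingle (L j) (?a @ [dcoord n j] @ us)) \<in> Krel n par"
    using Krel_expand_letter[OF uD usD Cons.prems(3)] by blast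
  have "\<exists>C. (\<forall>w. C w \<in> Lam) \<and>
     fsingle (L j) (map (dcoord n) (is @ [j]) @ us) - coord_comb n ?W C \<in> Krel n par" if "j < n" for j
  proof -
    have "set (is @ [j]) \<subseteq> {..<n}" using that Cons.prems(2) by auto
    moreover have "length (is @ [j]) + length us = length is + length (u # us)" by simp
    ultimately show ?thesis using Cons.IH[OF usD _ L(1), of "is @ [j]" j] by (simp only:)
  qed
  then obtain Cf where Cf: "\<And>j w. j < n \<Longrightarrow> Cf j w \<in> Lam"
    "\<And>j. j < n \<Longrightarrow> fsingle (L j) (?a @ [dcoord n j] @ us) - coord_comb n ?W (Cf j) \<in> Krel n par"
    by (simp only: map_append list.map append_assoc append_Cons append_Nil) metis
  have "(\<Sum>j<n. fsingle (L j) (?a @ [dcoord n j] @ us))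
        - (\<Sum>j<n. coord_comb n ?W (Cf j)) \<in> Krel n par"
    by (rule Krel_diff_sum) (rule Cf(2), simp)
  hence "fsingle l (?a @ u # us) - coord_comb n ?W (\<lambda>w. \<Sum>j<n. Cf j w) \<in> Krel n par"
    using Krel_diff_trans[OF L(2)] by (simp add: coord_comb_sum)
  moreover have "\<forall>w. (\<Sum>j<n. Cf j w) \<in> Lam" using Cf(1) by (auto intro: Lam_sum)
  ultimately show ?case by (intro exI[of _ "\<lambda>w. \<Sum>j<n. Cf j w"] conjI)
qed

definition coord_repr :: "nat \<Rightarrow> (nat \<Rightarrow> bool) \<Rightarrow> (nat list \<Rightarrow> bool) \<Rightarrow> tel \<Rightarrow> bool" where
  "coord_repr n par P x \<longleftrightarrow> (\<exists>W C. finite W \<and> (\<forall>w\<in>W. P w) \<and> (\<forall>w. C w \<in> Lam) \<and> x - coord_comb n W C \<in> Krel n par)"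

lemma coord_reprI: "finite W \<Longrightarrow> (\<And>w. w \<in> W \<Longrightarrow> P w) \<Longrightarrow> (\<And>w. C w \<in> Lam) \<Longrightarrow> x - coord_comb n W C \<in> Krel n par
   \<Longrightarrow> coord_repr n par P x"
  unfolding coord_repr_def by blast

lemma coord_repr_Krel_diff: "x - y \<in> Krel n par \<Longrightarrow> coord_repr n par P y \<Longrightarrow> coord_repr n par P x"
  unfolding coord_repr_def by (meson Krel_diff_trans)

lemma coord_comb_empty[simp]: "coord_comb n {} C = 0" by (simp add: coord_comb_def)

lemma coord_repr_Krel: "x \<in> Krel n par \<Longrightarrow> coord_repr n par P x"
  by (rule coord_reprI[of "{}" _ "\<lambda>_. 0"]) (simp_all only: coord_comb_empty diff_zero finite.emptyI Lam_zero empty_iff)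

lemma coord_repr_zero: "coord_repr n par P 0"
  by (rule coord_repr_Krel) (rule Krel.zero)

lemma coord_comb_extend:
  assumes "finite V" "W \<subseteq> V"
  shows "coord_comb n W C = coord_comb n V (\<lambda>w. if w \<in> W then C w else 0)"
  unfolding coord_comb_def using assms by (intro sum.mono_neutral_cong_left) auto

lemma coord_comb_add: "coord_comb n V C1 + coord_comb n V C2 = coord_comb n V (\<lambda>w. C1 w + C2 w)"
  unfolding coord_comb_def by (simp add: sum.distrib[symmetric] fsingle_add)

lemma coord_repr_add:
  assumes "coord_repr n par P x" "coord_repr n par P y" shows "coord_repr n par P (x + y)"
proof -
  obtain W C where W: "finite W" "\<forall>w\<in>W. P w" "\<forall>w. C w \<in> Lam" "x - coord_comb n W C \<in> Krel n par"
    using assms(1) unfolding coord_repr_def by blast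
  obtain W' C' where W': "finite W'" "\<forall>w\<in>W'. P w" "\<forall>w. C' w \<in> Lam" "y - coord_comb n W' C' \<in> Krel n par"
    using assms(2) unfolding coord_repr_def by blast
  let ?C = "\<lambda>w. (if w \<in> W then C w else 0) + (if w \<in> W' then C' w else 0)"
  have "coord_comb n W C + coord_comb n W' C' = coord_comb n (W \<union> W') ?C"
    using W W' by (simp add: coord_comb_extend[of "W \<union> W'" W] coord_comb_extend[of "W \<union> W'" W'] coord_comb_add)
  hence "(x + y) - coord_comb n (W \<union> W') ?C \<in> Krel n par"
    using Krel_diff_add[OF W(4) W'(4)] by (rule_tac Krel_subst[OF Krel_diff_add[OF W(4) W'(4)]]) simp
  moreover have "\<forall>w. ?C w \<in> Lam" using W W' by (auto intro: Lam_add)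
  ultimately show ?thesis using W W' by (intro coord_reprI[of "W \<union> W'" _ ?C]) auto
qed

lemma coord_repr_sum:
  "(\<And>j. j \<in> J \<Longrightarrow> coord_repr n par P (f j)) \<Longrightarrow> coord_repr n par P (sum f J)"
  by (rule sum_closed[where P = "coord_repr n par P"]) (simp_all add: coord_repr_zero coord_repr_add)

lemma coord_repr_refine:
  assumes "coord_repr n par P x" "\<And>w c. P w \<Longrightarrow> c \<in> Lam \<Longrightarrow> coord_repr n par Q (fsingle c (map (dcoord n) w))"
  shows "coord_repr n par Q x"
proof -
  obtain W C where W: "finite W" "\<forall>w\<in>W. P w" "\<forall>w. C w \<in> Lam" "x - coord_comb n W C \<in> Krel n par"
    using assms(1) unfolding coord_repr_def by blast
  have "coord_repr n par Q (coord_comb n W C)" unfolding coord_comb_def using W assms(2) by (intro coord_repr_sum) auto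
  thus ?thesis using W(4) by (rule coord_repr_Krel_diff[rotated])
qed

lemma Krel_swap_dcoords:
  assumes "set a \<subseteq> Dual n" "set b \<subseteq> Dual n" "l \<in> Lam"
  shows "fsingle l (a @ [dcoord n i, dcoord n j] @ b)
     - fsingle (gmul l (gconst (psign (par i) (par j)))) (a @ [dcoord n j, dcoord n i] @ b) \<in> Krel n par"
proof -
  have "fsingle (gconst 1) (a @ [dcoord n i, dcoord n j] @ b)
     - fsingle (gconst (psign (par i) (par j))) (a @ [dcoord n j, dcoord n i] @ b) \<in> Krel n par"
    using assms Dual_dcoord dpar_dcoord by (intro Krel.symm) auto
  from Krel_diff_flmul[OF this assms(3)] show ?thesis
    by (rule Krel_subst) (simp only: flmul_fsingle gmul_one_right[OF Lam_zero_on_infinite[OF assms(3)]] flmul_diff)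
qed

lemma Krel_insort_dcoord:
  assumes "sorted s" "set a \<subseteq> Dual n" "l \<in> Lam"
  shows "\<exists>l'\<in>Lam. fsingle l (a @ dcoord n i # map (dcoord n) s) - fsingle l' (a @ map (dcoord n) (insort i s)) \<in> Krel n par"
  using assms
proof (induction s arbitrary: a l)
  case Nil
  have "fsingle l (a @ dcoord n i # map (dcoord n) []) - fsingle l (a @ map (dcoord n) (insort i [])) \<in> Krel n par"
    by (rule Krel_subst[OF Krel_diff_refl]) simp
  thus ?case using Nil by blast
next
  case (Cons h s)
  show ?case
  proof (cases "i \<le> h")
    case True
    have "fsingle l (a @ dcoord n i # map (dcoord n) (h # s)) - fsingle l (a @ map (dcoord n) (insort i (h # s))) \<in> Krel n par"
      by (rule Krel_subst[OF Krel_diff_refl]) (simp add: True)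
    thus ?thesis using Cons by blast
  next
    case False
    let ?l2 = "gmul l (gconst (psign (par i) (par h)))"
    have 1: "fsingle l (a @ [dcoord n i, dcoord n h] @ map (dcoord n) s) - fsingle ?l2 (a @ [dcoord n h, dcoord n i] @ map (dcoord n) s)
        \<in> Krel n par" using Cons.prems Dual_dcoord by (intro Krel_swap_dcoords) auto
    have l2: "?l2 \<in> Lam" using Cons.prems by (intro Lam_gmul) auto
    have a2: "set (a @ [dcoord n h]) \<subseteq> Dual n" using Cons.prems Dual_dcoord by auto
    obtain l' where l': "l' \<in> Lam" "fsingle ?l2 ((a @ [dcoord n h]) @ dcoord n i # map (dcoord n) s)
       - fsingle l' ((a @ [dcoord n h]) @ map (dcoord n) (insort i s)) \<in> Krel n par"
      using Cons.IH[OF _ a2 l2] Cons.prems(1) by (simp only: sorted_simps(2)) blast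
    have l2': "fsingle ?l2 (a @ [dcoord n h, dcoord n i] @ map (dcoord n) s)
       - fsingle l' ((a @ [dcoord n h]) @ map (dcoord n) (insort i s)) \<in> Krel n par"
      using l'(2) by (rule Krel_subst) simp
    have "fsingle l (a @ dcoord n i # map (dcoord n) (h # s)) - fsingle l' (a @ map (dcoord n) (insort i (h # s))) \<in> Krel n par"
      using Krel_diff_trans[OF 1 l2'] by (rule Krel_subst) (simp add: False)
    thus ?thesis using l'(1) by blast
  qed
qed

lemma Krel_sort_dcoords:
  assumes "set a \<subseteq> Dual n" "l \<in> Lam"
  shows "\<exists>l'\<in>Lam. fsingle l (a @ map (dcoord n) w) - fsingle l' (a @ map (dcoord n) (sort w)) \<in> Krel n par"
  using assms
proof (induction w arbitrary: a l)
  case Nil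
  have "fsingle l (a @ map (dcoord n) []) - fsingle l (a @ map (dcoord n) (sort [])) \<in> Krel n par"
    by (rule Krel_subst[OF Krel_diff_refl]) simp
  thus ?case using Nil by blast
next
  case (Cons j w)
  have a2: "set (a @ [dcoord n j]) \<subseteq> Dual n" using Cons.prems Dual_dcoord by auto
  obtain l' where l': "l' \<in> Lam" "fsingle l ((a @ [dcoord n j]) @ map (dcoord n) w)
       - fsingle l' ((a @ [dcoord n j]) @ map (dcoord n) (sort w)) \<in> Krel n par"
    using Cons.IH[OF a2 Cons.prems(2)] by blast
  obtain l'' where l'': "l'' \<in> Lam" "fsingle l' (a @ dcoord n j # map (dcoord n) (sort w))
       - fsingle l'' (a @ map (dcoord n) (insort j (sort w))) \<in> Krel n par"
    using Krel_insort_dcoord[OF sorted_sort Cons.prems(1) l'(1)] by blast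
  have "fsingle l (a @ map (dcoord n) (j # w)) - fsingle l'' (a @ map (dcoord n) (sort (j # w))) \<in> Krel n par"
    using Krel_diff_trans[OF Krel_subst[OF l'(2)] l''(2)] by (rule Krel_subst) simp_all
  thus ?case using l''(1) by blast
qed

lemma Krel_repeated_odd_dcoord:
  assumes "par i" "set a \<subseteq> Dual n" "set b \<subseteq> Dual n" "l \<in> Lam"
  shows "fsingle l (a @ [dcoord n i, dcoord n i] @ b) \<in> Krel n par"
proof -
  have "fsingle (gconst 1) (a @ [dcoord n i, dcoord n i] @ b)
     - fsingle (gconst (psign (par i) (par i))) (a @ [dcoord n i, dcoord n i] @ b) \<in> Krel n par"
    by (rule Krel.symm[OF assms(2,3) Dual_dcoord Dual_dcoord dpar_dcoord dpar_dcoord])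
  moreover have "gconst 1 - gconst (psign (par i) (par i)) = gconst 2"
    using assms(1) by (auto simp: psign_def gconst_def fun_eq_iff)
  ultimately have "fsingle (gconst 2) (a @ [dcoord n i, dcoord n i] @ b) \<in> Krel n par"
    by (simp only: fsingle_diff)
  from Krel.lmul[OF Lam_gconst[of "1/2"] this]
  have "fsingle (gconst 1) (a @ [dcoord n i, dcoord n i] @ b) \<in> Krel n par"
    by (rule Krel_subst) (simp add: flmul_fsingle gmul_gconst_gconst)
  from Krel.lmul[OF assms(4) this] show ?thesis
    by (rule Krel_subst) (simp only: flmul_fsingle_one assms(4))
qed

lemma sorted_not_distinct_filter:
  "sorted s \<Longrightarrow> \<not> distinct (filter par s) \<Longrightarrow> \<exists>a i b. s = a @ [i, i] @ b \<and> par i"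
proof (induction s)
  case Nil thus ?case by simp
next
  case (Cons x s)
  show ?case
  proof (cases "distinct (filter par s)")
    case False
    then obtain a i b where "s = a @ [i, i] @ b" "par i" using Cons by auto
    thus ?thesis by (intro exI[of _ "x # a"]) auto
  next
    case True
    hence px: "par x" "x \<in> set s" using Cons.prems(2) by (auto split: if_splits)
    then obtain y s' where s: "s = y # s'" by (cases s) auto
    have "y = x" using Cons.prems(1) px(2) s by (auto intro: order.antisym)
    thus ?thesis using s px by (intro exI[of _ "[]"]) auto
  qed
qed

definition normal_word :: "nat \<Rightarrow> (nat \<Rightarrow> bool) \<Rightarrow> nat list \<Rightarrow> bool" where
  "normal_word n par w \<longleftrightarrow> set w \<subseteq> {..<n} \<and> sorted w \<and> distinct (filter par w)"

lemma coord_repr_normal_word: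
  assumes "set w \<subseteq> {..<n}" "c \<in> Lam"
  shows "coord_repr n par (normal_word n par) (fsingle c (map (dcoord n) w))"
proof -
  have "\<exists>l'\<in>Lam. fsingle c ([] @ map (dcoord n) w) - fsingle l' ([] @ map (dcoord n) (sort w)) \<in> Krel n par"
    by (rule Krel_sort_dcoords) (simp_all add: assms)
  then obtain c' where c': "c' \<in> Lam" "fsingle c ([] @ map (dcoord n) w) - fsingle c' ([] @ map (dcoord n) (sort w)) \<in> Krel n par"
    by blast
  show ?thesis
  proof (cases "distinct (filter par (sort w))")
    case True
    have g: "normal_word n par (sort w)" using True assms by (simp add: normal_word_def)
    have "fsingle c (map (dcoord n) w) - coord_comb n {sort w} (\<lambda>_. c') \<in> Krel n par"
      using c'(2) by (rule Krel_subst) (simp add: coord_comb_def)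
    thus ?thesis using g c'(1) by (intro coord_reprI[of "{sort w}" _ "\<lambda>_. c'"]) auto
  next
    case False
    then obtain a i b where ab: "sort w = a @ [i, i] @ b" "par i"
      using sorted_not_distinct_filter[OF sorted_sort] by blast
    have "fsingle c' (map (dcoord n) a @ [dcoord n i, dcoord n i] @ map (dcoord n) b) \<in> Krel n par"
      using ab c'(1) set_map_dcoord by (intro Krel_repeated_odd_dcoord) auto
    hence "fsingle c (map (dcoord n) w) \<in> Krel n par"
      using Krel.add[OF c'(2)] ab(1) by (rule_tac Krel_subst[OF Krel.add[OF c'(2)]]) simp_all
    thus ?thesis by (rule coord_repr_Krel)
  qed
qed

lemma FT_eq_sum_fsingle:
  assumes "x \<in> FT n"
  shows "x = (\<Sum>us\<in>{us. x us \<noteq> 0}. fsingle (x us) us)"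
proof (rule ext)
  fix ws
  have f: "finite {us. x us \<noteq> 0}" using assms by (simp add: FT_def)
  have "(\<Sum>us\<in>{us. x us \<noteq> 0}. fsingle (x us) us) ws = (\<Sum>us\<in>{us. x us \<noteq> 0}. if ws = us then x us else 0)"
    by (simp add: sum_fun_apply fsingle_def)
  also have "\<dots> = x ws" using f by (simp add: sum.delta')
  finally show "x ws = (\<Sum>us\<in>{us. x us \<noteq> 0}. fsingle (x us) us) ws" by simp
qed

lemma coord_repr_normal_FT:
  assumes "x \<in> FT n"
  shows "coord_repr n par (normal_word n par) x"
proof -
  have f: "finite {us. x us \<noteq> 0}" using assms by (simp add: FT_def)
  have "coord_repr n par (\<lambda>w. set w \<subseteq> {..<n}) (fsingle (x us) us)" if "x us \<noteq> 0" for us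
  proof -
    have "set us \<subseteq> Dual n" "x us \<in> Lam" using assms that by (auto simp: FT_def)
    then obtain C where C: "\<forall>w. C w \<in> Lam"
      "fsingle (x us) (map (dcoord n) [] @ us) - coord_comb n (coord_words n (length [] + length us)) C \<in> Krel n par"
      using Krel_expand_dcoords[of us n "[]" "x us" par] by auto
    show ?thesis using C finite_coord_words by (intro coord_reprI[of "coord_words n (length us)" _ C]) (auto simp: coord_words_def)
  qed
  hence "coord_repr n par (\<lambda>w. set w \<subseteq> {..<n}) (\<Sum>us\<in>{us. x us \<noteq> 0}. fsingle (x us) us)"
    using f by (intro coord_repr_sum) auto
  hence "coord_repr n par (\<lambda>w. set w \<subseteq> {..<n}) x" using FT_eq_sum_fsingle[OF assms] by simp
  thus ?thesis by (rule coord_repr_refine) (rule coord_repr_normal_word)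
qed

section \<open>Evaluation separates normal forms\<close>

lemma sum_powers_eq_0_imp_coeff_eq_0:
  fixes a :: "nat \<Rightarrow> 'a::{idom,ring_char_0}"
  assumes K: "finite K" and zero: "\<And>x. (\<Sum>k\<in>K. a k * x ^ k) = 0" and k: "k \<in> K"
  shows "a k = 0"
proof -
  define p where "p = (\<Sum>k\<in>K. monom (a k) k)"
  have "\<forall>x. poly p x = 0" by (simp add: p_def poly_sum poly_monom zero)
  hence "p = 0" by (simp add: poly_all_0_iff_0)
  moreover have "coeff p k = a k" using K k by (simp add: p_def coeff_sum)
  ultimately show ?thesis by simp
qed

lemma sum_group_last_exponent:
  fixes c :: "'w \<Rightarrow> 'a::comm_semiring_1"
  assumes "finite W"
  shows "(\<Sum>k\<in>(\<lambda>w. \<alpha> w m) ` W. (\<Sum>w\<in>{w \<in> W. \<alpha> w m = k}. c w * (\<Prod>i<m. t i ^ \<alpha> w i)) * x ^ k)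
    = (\<Sum>w\<in>W. c w * (\<Prod>i<Suc m. (t(m := x)) i ^ \<alpha> w i))"
proof -
  have "(\<Sum>k\<in>(\<lambda>w. \<alpha> w m) ` W. (\<Sum>w\<in>{w \<in> W. \<alpha> w m = k}. c w * (\<Prod>i<m. t i ^ \<alpha> w i)) * x ^ k)
      = (\<Sum>k\<in>(\<lambda>w. \<alpha> w m) ` W. \<Sum>w\<in>{w \<in> W. \<alpha> w m = k}. c w * (\<Prod>i<m. t i ^ \<alpha> w i) * x ^ \<alpha> w m)"
    by (simp add: sum_distrib_right)
  also have "\<dots> = (\<Sum>w\<in>W. c w * (\<Prod>i<m. t i ^ \<alpha> w i) * x ^ \<alpha> w m)"
    by (rule sum.group) (use assms in auto)
  also have "\<dots> = (\<Sum>w\<in>W. c w * (\<Prod>i<Suc m. (t(m := x)) i ^ \<alpha> w i))"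
    by (intro sum.cong refl) (simp add: prod.lessThan_Suc algebra_simps)
  finally show ?thesis .
qed

lemma inj_on_fun_upd_constant:
  assumes "inj_on \<alpha> W" "\<And>w. w \<in> W \<Longrightarrow> \<alpha> w m = k"
  shows "inj_on (\<lambda>w. (\<alpha> w)(m := c)) W"
proof (rule inj_onI)
  fix w w' assume w: "w \<in> W" "w' \<in> W" and eq: "(\<alpha> w)(m := c) = (\<alpha> w')(m := c)"
  have "\<alpha> w = \<alpha> w'"
  proof
    fix i show "\<alpha> w i = \<alpha> w' i" using fun_cong[OF eq, of i] assms(2)[OF w(1)] assms(2)[OF w(2)]
      by (cases "i = m") auto
  qed
  thus "w = w'" using assms(1) w by (auto dest: inj_onD)
qed

text \<open>Induction on the number of variables: grouping the terms by the exponent of the last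
  variable reduces to one variable fewer for each group.\<close>

lemma monomials_independent:
  fixes c :: "'w \<Rightarrow> 'a::{idom,ring_char_0}" and \<alpha> :: "'w \<Rightarrow> nat \<Rightarrow> nat"
  assumes "finite W" "inj_on \<alpha> W" "\<And>w i. w \<in> W \<Longrightarrow> n \<le> i \<Longrightarrow> \<alpha> w i = 0"
    "\<And>t. (\<Sum>w\<in>W. c w * (\<Prod>i<n. t i ^ \<alpha> w i)) = 0"
  shows "\<forall>w\<in>W. c w = 0"
  using assms
proof (induction n arbitrary: W \<alpha> c)
  case 0
  show ?case
  proof
    fix w assume w: "w \<in> W"
    have "W = {w}"
    proof (intro equalityI subsetI)
      fix w' assume "w' \<in> W"
      moreover have "\<alpha> w' = \<alpha> w" using 0(3) w \<open>w' \<in> W\<close> by (auto simp: fun_eq_iff)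
      ultimately show "w' \<in> {w}" using 0(2) w by (auto dest: inj_onD)
    qed (use w in auto)
    thus "c w = 0" using 0(4)[of "\<lambda>_. 0"] by simp
  qed
next
  case (Suc m)
  show ?case
  proof
    fix w0 assume w0: "w0 \<in> W"
    let ?Wk = "{w \<in> W. \<alpha> w m = \<alpha> w0 m}"
    let ?\<alpha>' = "\<lambda>w. (\<alpha> w)(m := 0)"
    have "\<forall>w\<in>?Wk. c w = 0"
    proof (rule Suc.IH)
      show "finite ?Wk" using Suc(2) by simp
      show "inj_on ?\<alpha>' ?Wk"
        by (rule inj_on_fun_upd_constant) (use Suc(3) in \<open>auto intro: inj_on_subset\<close>)
      show "\<And>w i. w \<in> ?Wk \<Longrightarrow> m \<le> i \<Longrightarrow> ?\<alpha>' w i = 0" using Suc(4) by auto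
      fix t :: "nat \<Rightarrow> 'a"
      define a where "a k = (\<Sum>w\<in>{w \<in> W. \<alpha> w m = k}. c w * (\<Prod>i<m. t i ^ \<alpha> w i))" for k
      have "(\<Sum>k\<in>(\<lambda>w. \<alpha> w m) ` W. a k * x ^ k) = 0" for x
        using sum_group_last_exponent[OF Suc(2), where c = c and t = t and m = m and \<alpha> = \<alpha> and x = x] Suc(5)[of "t(m := x)"]
        by (simp add: a_def)
      hence "a (\<alpha> w0 m) = 0"
        by (rule sum_powers_eq_0_imp_coeff_eq_0[rotated]) (use Suc(2) w0 in auto)
      moreover have "(\<Prod>i<m. t i ^ ?\<alpha>' w i) = (\<Prod>i<m. t i ^ \<alpha> w i)" for w
        by (intro prod.cong) auto
      ultimately show "(\<Sum>w\<in>?Wk. c w * (\<Prod>i<m. t i ^ ?\<alpha>' w i)) = 0" by (simp add: a_def)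
    qed
    thus "c w0 = 0" using w0 by simp
  qed
qed

definition gmono :: "nat set \<Rightarrow> lam" where
  "gmono K = (\<lambda>S. if S = K then 1 else 0)"

lemma Lam_gmono: "finite K \<Longrightarrow> gmono K \<in> Lam"
  unfolding Lam_def gmono_def by (auto intro: finite_subset[of _ "{K}"])

lemma zero_on_infinite_gmono: "finite K \<Longrightarrow> zero_on_infinite (gmono K)"
  by (simp add: Lam_zero_on_infinite Lam_gmono)

lemma lpar_gmono: "lpar (odd (card K)) (gmono K)"
  by (auto simp: lpar_def gmono_def)

lemma gmono_empty: "gmono {} = gconst 1"
  by (auto simp: gmono_def gconst_def fun_eq_iff)

lemma gmul_gmono_apply:
  assumes "finite U"
  shows "gmul x (gmono K) U = (if K \<subseteq> U then gsign (U - K) K * x (U - K) else 0)"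
proof -
  have "gmul x (gmono K) U = (\<Sum>S\<in>Pow U. gsign S (U - S) * x S * gmono K (U - S))"
    by (rule gmul_finite[OF assms])
  also have "\<dots> = (\<Sum>S\<in>Pow U. if S = U - K \<and> K \<subseteq> U then gsign S K * x S else 0)"
  proof (rule sum.cong[OF refl])
    fix S assume "S \<in> Pow U"
    hence "(U - S = K) \<longleftrightarrow> (S = U - K \<and> K \<subseteq> U)" by auto
    thus "gsign S (U - S) * x S * gmono K (U - S) = (if S = U - K \<and> K \<subseteq> U then gsign S K * x S else 0)"
      by (auto simp: gmono_def)
  qed
  also have "\<dots> = (if K \<subseteq> U then gsign (U - K) K * x (U - K) else 0)"
    using assms by (cases "K \<subseteq> U") (auto simp: sum.delta')
  finally show ?thesis .
qed

lemma gmul_gmono_insert: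
  assumes "finite K" "\<And>k. k \<in> K \<Longrightarrow> a < k"
  shows "gmul (gmono {a}) (gmono K) = gmono (insert a K)"
proof (rule ext)
  fix U
  show "gmul (gmono {a}) (gmono K) U = gmono (insert a K) U"
  proof (cases "finite U")
    case True
    have aK: "a \<notin> K" using assms(2) by blast
    have s: "gsign {a} K = 1" using assms(2) by (intro gsign_less) auto
    have "gmul (gmono {a}) (gmono K) U = (if K \<subseteq> U then gsign (U - K) K * gmono {a} (U - K) else 0)"
      by (rule gmul_gmono_apply[OF True])
    also have "\<dots> = gmono (insert a K) U"
    proof (cases "U = insert a K")
      case True
      hence "U - K = {a}" "K \<subseteq> U" using aK by auto
      thus ?thesis using True s by (simp add: gmono_def)
    next
      case False
      have "K \<subseteq> U \<Longrightarrow> U - K \<noteq> {a}" using False by auto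
      thus ?thesis using False by (auto simp: gmono_def)
    qed
    finally show ?thesis .
  next
    case False
    hence "U \<noteq> insert a K" using assms(1) by auto
    thus ?thesis using False by (simp add: gmono_def)
  qed
qed

lemma prod_list_map_count:
  fixes xs :: "nat list"
  assumes "set xs \<subseteq> {..<n}"
  shows "prod_list (map t xs) = (\<Prod>i<n. t i ^ count (mset xs) i)"
  using assms
proof (induction xs)
  case Nil thus ?case by simp
next
  case (Cons x xs)
  have xn: "x < n" using Cons by auto
  have "(\<Prod>i<n. t i ^ count (mset (x # xs)) i) = (\<Prod>i<n. t i ^ count (mset xs) i * (if i = x then t i else 1))"
    by (intro prod.cong) (auto simp: mult.commute)
  also have "\<dots> = (\<Prod>i<n. t i ^ count (mset xs) i) * t x"
  proof -
    have "(\<Prod>i<n. if i = x then t i else 1) = t x"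
      using xn by (subst prod.delta) auto
    thus ?thesis by (simp add: prod.distrib mult.commute)
  qed
  finally show ?case using Cons by (simp add: mult.commute)
qed

definition test_vector :: "nat \<Rightarrow> (nat \<Rightarrow> bool) \<Rightarrow> nat \<Rightarrow> (nat \<Rightarrow> complex) \<Rightarrow> mel" where
  "test_vector n par N t = (\<lambda>i. if i < n then (if par i then gmono {N + i} else gconst (t i)) else 0)"

lemma test_vector_M0: "test_vector n par N t \<in> M0 n par"
  unfolding M0_def Mset_def mpar_def test_vector_def
  by (auto simp: Lam_gmono lpar_gmono[of "{_}", simplified])

lemma gprod_test_vector:
  assumes "set w \<subseteq> {..<n}" "sorted w" "distinct (filter par w)"
  shows "gprod (map (test_vector n par N t) w) =
    scal (prod_list (map t (filter (\<lambda>i. \<not> par i) w))) (gmono ((\<lambda>i. N + i) ` set (filter par w)))"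
  using assms
proof (induction w)
  case Nil thus ?case by (simp add: gmono_empty)
next
  case (Cons i w)
  have i: "i < n" using Cons by auto
  have IH: "gprod (map (test_vector n par N t) w) =
    scal (prod_list (map t (filter (\<lambda>i. \<not> par i) w))) (gmono ((\<lambda>i. N + i) ` set (filter par w)))"
    using Cons by (intro Cons.IH) (auto split: if_splits)
  let ?c = "prod_list (map t (filter (\<lambda>i. \<not> par i) w))"
  let ?K = "(\<lambda>i. N + i) ` set (filter par w)"
  show ?case
  proof (cases "par i")
    case True
    have gt: "N + i < k" if kK: "k \<in> ?K" for k
    proof -
      obtain j where j: "k = N + j" "j \<in> set w" "par j" using kK by auto
      have "i \<le> j" using Cons.prems(2) j by auto
      moreover have "j \<noteq> i" using Cons.prems(3) True j by auto
      ultimately show ?thesis using j by simp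
    qed
    have "gprod (map (test_vector n par N t) (i # w)) = gmul (gmono {N + i}) (scal ?c (gmono ?K))"
      using i True IH by (simp add: test_vector_def)
    also have "\<dots> = scal ?c (gmono (insert (N + i) ?K))"
      by (simp add: gmul_scal_right gmul_gmono_insert gt)
    finally show ?thesis using True by simp
  next
    case False
    have "gprod (map (test_vector n par N t) (i # w)) = gmul (gconst (t i)) (scal ?c (gmono ?K))"
      using i False IH by (simp add: test_vector_def)
    also have "\<dots> = scal (t i * ?c) (gmono ?K)"
      by (rule gmul_gconst_scal) (simp add: zero_on_infinite_gmono)
    finally show ?thesis using False by simp
  qed
qed

lemma gmul_gmono_apply_separated:
  assumes "finite S" "finite K0" "S \<subseteq> {..<N}" "K0 \<subseteq> {N..}" "K \<subseteq> {N..}"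
    "\<And>T. x T \<noteq> 0 \<Longrightarrow> T \<subseteq> {..<N}"
  shows "gmul x (gmono K) (S \<union> K0) = (if K = K0 then x S else 0)"
proof -
  let ?U = "S \<union> K0"
  have fU: "finite ?U" using assms by simp
  have e: "gmul x (gmono K) ?U = (if K \<subseteq> ?U then gsign (?U - K) K * x (?U - K) else 0)"
    by (rule gmul_gmono_apply[OF fU])
  show ?thesis
  proof (cases "K = K0")
    case True
    have disj: "x \<notin> K0" if "x \<in> S" for x
    proof -
      have "x < N" using that assms(3) by auto
      thus ?thesis using assms(4) by auto
    qed
    have "?U - K = S" using True disj by auto
    moreover have "gsign S K = 1" using True assms(3,4) by (intro gsign_less) fastforce
    ultimately show ?thesis using e True by simp
  next
    case False
    have "x (?U - K) = 0" if "K \<subseteq> ?U"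
    proof (rule ccontr)
      assume "x (?U - K) \<noteq> 0"
      hence sub: "?U - K \<subseteq> {..<N}" by (rule assms(6))
      have "K0 \<subseteq> K"
      proof
        fix k assume "k \<in> K0"
        hence "k \<ge> N" using assms(4) by auto
        thus "k \<in> K" using sub \<open>k \<in> K0\<close> by auto
      qed
      moreover have "K \<subseteq> K0"
      proof
        fix k assume "k \<in> K"
        hence "k \<ge> N" using assms(5) by auto
        hence "k \<notin> S" using assms(3) by auto
        thus "k \<in> K0" using that \<open>k \<in> K\<close> by auto
      qed
      ultimately show False using False by auto
    qed
    thus ?thesis using e False by auto
  qed
qed

definition odd_support :: "nat \<Rightarrow> (nat \<Rightarrow> bool) \<Rightarrow> nat list \<Rightarrow> nat set" where
  "odd_support N par w = (\<lambda>i. N + i) ` set (filter par w)"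

definition even_exponent :: "(nat \<Rightarrow> bool) \<Rightarrow> nat list \<Rightarrow> nat \<Rightarrow> nat" where
  "even_exponent par w i = count (mset (filter (\<lambda>i. \<not> par i) w)) i"

lemma normal_word_eqI:
  assumes w: "normal_word n par w" and w': "normal_word n par w'"
    and odd: "odd_support N par w = odd_support N par w'"
    and even: "even_exponent par w = even_exponent par w'"
  shows "w = w'"
proof -
  have "set (filter par w) = set (filter par w')"
    using odd by (simp add: odd_support_def inj_image_eq_iff inj_on_def)
  hence "mset (filter par w) = mset (filter par w')"
    using w w' unfolding normal_word_def by (metis set_eq_iff_mset_eq_distinct)
  moreover have "mset (filter (\<lambda>i. \<not> par i) w) = mset (filter (\<lambda>i. \<not> par i) w')"
    using even by (intro multiset_eqI) (simp add: even_exponent_def fun_eq_iff)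
  ultimately have "mset w = mset w'"
    by (metis mset_filter multiset_partition)
  thus "w = w'"
    using w w' by (metis normal_word_def sorted_sort_id properties_for_sort)
qed

lemma gmul_gprod_test_vector_apply:
  assumes w: "normal_word n par w" and S: "finite S" "S \<subseteq> {..<N}"
    and K0: "finite K0" "K0 \<subseteq> {N..}" and c: "\<And>T. c T \<noteq> 0 \<Longrightarrow> T \<subseteq> {..<N}"
  shows "gmul c (gprod (map (test_vector n par N t) w)) (S \<union> K0) =
    (if odd_support N par w = K0 then c S * (\<Prod>i<n. t i ^ even_exponent par w i) else 0)"
proof -
  have "prod_list (map t (filter (\<lambda>i. \<not> par i) w)) = (\<Prod>i<n. t i ^ even_exponent par w i)"
    unfolding even_exponent_def using w by (intro prod_list_map_count) (auto simp: normal_word_def)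
  moreover have "gmul c (gmono (odd_support N par w)) (S \<union> K0) = (if odd_support N par w = K0 then c S else 0)"
    by (rule gmul_gmono_apply_separated[OF S(1) K0(1) S(2) K0(2)]) (auto simp: odd_support_def dest: c)
  moreover have "gprod (map (test_vector n par N t) w) =
      scal (prod_list (map t (filter (\<lambda>i. \<not> par i) w))) (gmono (odd_support N par w))"
    using w by (simp add: gprod_test_vector normal_word_def odd_support_def)
  ultimately show ?thesis by (simp only: gmul_scal_right) (simp add: scal_def)
qed

lemma Lam_indices_bounded:
  assumes "finite W" "\<And>w. C w \<in> Lam"
  obtains N :: nat where "\<And>w S. w \<in> W \<Longrightarrow> C w S \<noteq> 0 \<Longrightarrow> S \<subseteq> {..<N}"
proof -
  define Sup where "Sup = (\<Union>w\<in>W. \<Union>{S. C w S \<noteq> 0})"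
  have fin: "finite Sup" unfolding Sup_def using assms by (auto simp: Lam_def)
  have "S \<subseteq> {..<Suc (Max (insert 0 Sup))}" if "w \<in> W" "C w S \<noteq> 0" for w S
  proof
    fix x assume "x \<in> S"
    hence "x \<in> Sup" using that unfolding Sup_def by auto
    hence "x \<le> Max (insert 0 Sup)" using fin by simp
    thus "x \<in> {..<Suc (Max (insert 0 Sup))}" by simp
  qed
  thus ?thesis by (rule that)
qed

text \<open>A coefficient \<open>C w0 S \<noteq> 0\<close> is isolated by evaluating at test vectors whose odd generators
  \<open>\<xi>\<^sub>N, \<xi>\<^sub>N\<^sub>+\<^sub>1, \<dots>\<close> do not occur in any coefficient, reading off the \<open>S \<union> odd_support\<close>
  component, and applying the independence of monomials in the even coordinates \<open>t\<close>.\<close>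

lemma coord_comb_coeffs_eq_0:
  assumes W: "finite W" and G: "\<And>w. w \<in> W \<Longrightarrow> normal_word n par w" and CL: "\<And>w. C w \<in> Lam"
    and H: "\<And>v. v \<in> M0 n par \<Longrightarrow> (\<Sum>w\<in>W. gmul (C w) (gprod (map v w))) = 0"
  shows "\<forall>w\<in>W. C w = 0"
proof
  fix w0 assume w0: "w0 \<in> W"
  obtain N where supN: "\<And>w S. w \<in> W \<Longrightarrow> C w S \<noteq> 0 \<Longrightarrow> S \<subseteq> {..<N}"
    using Lam_indices_bounded[where C = C, OF W CL] by metis
  let ?K0 = "odd_support N par w0"
  let ?WK = "{w \<in> W. odd_support N par w = ?K0}"
  have "C w0 S = 0" for S
  proof (rule ccontr)
    assume nz: "C w0 S \<noteq> 0"
    have SN: "finite S" "S \<subseteq> {..<N}" using nz CL[of w0] supN w0 by (auto simp: Lam_def)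
    have K0: "finite ?K0" "?K0 \<subseteq> {N..}" by (auto simp: odd_support_def)
    have "\<forall>w\<in>?WK. C w S = 0"
    proof (rule monomials_independent[of ?WK "even_exponent par" n])
      show "finite ?WK" using W by simp
      show "inj_on (even_exponent par) ?WK"
        by (rule inj_onI) (use G in \<open>auto intro: normal_word_eqI\<close>)
      show "\<And>w i. w \<in> ?WK \<Longrightarrow> n \<le> i \<Longrightarrow> even_exponent par w i = 0"
        using G by (fastforce simp: even_exponent_def normal_word_def count_mset_0_iff)
      fix t :: "nat \<Rightarrow> complex"
      have "(\<Sum>w\<in>W. gmul (C w) (gprod (map (test_vector n par N t) w))) (S \<union> ?K0) =
          (\<Sum>w\<in>W. if odd_support N par w = ?K0 then C w S * (\<Prod>i<n. t i ^ even_exponent par w i) else 0)"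
        unfolding sum_fun_apply
        by (intro sum.cong refl gmul_gprod_test_vector_apply[OF G SN K0]) (auto dest: supN)
      also have "\<dots> = (\<Sum>w\<in>?WK. C w S * (\<Prod>i<n. t i ^ even_exponent par w i))"
        using W by (simp add: sum.inter_filter)
      finally show "(\<Sum>w\<in>?WK. C w S * (\<Prod>i<n. t i ^ even_exponent par w i)) = 0"
        using H[OF test_vector_M0] by simp
    qed
    thus False using w0 nz by simp
  qed
  thus "C w0 = 0" by (simp add: fun_eq_iff)
qed

lemma Krel_if_Fmap_eq_0:
  assumes x: "x \<in> FT n" and H: "\<forall>v\<in>M0 n par. Fmap x v = 0"
  shows "x \<in> Krel n par"
proof -
  obtain W C where W: "finite W" "\<forall>w\<in>W. normal_word n par w" "\<forall>w. C w \<in> Lam" "x - coord_comb n W C \<in> Krel n par"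
    using coord_repr_normal_FT[OF x, of par] unfolding coord_repr_def by blast
  have "\<forall>w\<in>W. C w = 0"
  proof (rule coord_comb_coeffs_eq_0[of W n par C])
    fix v assume v: "v \<in> M0 n par"
    have "Fmap (x - (x - coord_comb n W C)) v = Fmap x v - Fmap (x - coord_comb n W C) v"
      using finite_tsupp_FT[OF x] finite_tsupp_Krel[OF W(4)] by (rule Fmap_diff)
    also have "\<dots> = 0" using H v Fmap_Krel_eq_0[OF W(4) v] by simp
    finally have "Fmap (coord_comb n W C) v = 0" by simp
    thus "(\<Sum>w\<in>W. gmul (C w) (gprod (map v w))) = 0" using Fmap_coord_comb[OF M0_Mset[OF v]] by simp
  qed (use W in auto)
  hence "coord_comb n W C = 0" unfolding coord_comb_def by simp
  hence "x - coord_comb n W C = x" by simp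
  thus ?thesis using W(4) by (rule_tac Krel_subst[OF W(4)]) simp
qed

section \<open>Multiplicativity, parity and homogeneity\<close>

lemma Fmap_tterm:
  assumes v: "v \<in> M0 n par" and us: "set us \<subseteq> Dual n" and l: "l \<in> Lam" and mu: "\<mu> \<in> Lam"
  shows "Fmap (tterm n par l us \<mu> ws) v = gmul (gmul l (eval_word us v)) (gmul \<mu> (eval_word ws v))"
proof (cases ws)
  case Nil
  show ?thesis
  proof (cases "us = []")
    case True
    thus ?thesis using Nil l mu
      by (simp add: tterm_def Fmap_fsingle eval_word_Nil gmul_one_right zero_on_infinite_gmul Lam_zero_on_infinite)
  next
    case False
    then obtain bl u where ub: "us = bl @ [u]" by (metis append_butlast_last_id)
    have u: "u \<in> Dual n" using us ub by auto
    have "Fmap (tterm n par l us \<mu> ws) v = gmul l (gmul (eval_word bl v) (gmul (gmul (u v) \<mu>) (gconst 1)))"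
      using Nil ub by (simp add: tterm_def Fmap_fsingle eval_word_append eval_word_Cons eval_word_Nil dright_apply_M0[OF u v])
    also have "\<dots> = gmul (gmul l (eval_word us v)) (gmul \<mu> (eval_word ws v))"
      using Nil ub mu by (simp add: eval_word_append eval_word_Cons eval_word_Nil gmul_one_right zero_on_infinite_gmul Lam_zero_on_infinite gmul_assoc gmul_one_left[OF Lam_zero_on_infinite[OF mu]])
    finally show ?thesis .
  qed
next
  case (Cons h t)
  have "dlmul n \<mu> h v = gmul \<mu> (h v)" using M0_Mset[OF v] by (simp add: dlmul_def)
  thus ?thesis using Cons by (simp add: tterm_def Fmap_fsingle eval_word_append eval_word_Cons gmul_assoc)
qed

lemma Fmap_tmul:
  assumes x: "x \<in> FT n" and y: "y \<in> FT n" and v: "v \<in> M0 n par"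
  shows "Fmap (tmul n par x y) v = gmul (Fmap x v) (Fmap y v)"
proof -
  let ?X = "{us. x us \<noteq> 0}" and ?Y = "{ws. y ws \<noteq> 0}"
  have fX: "finite ?X" and fY: "finite ?Y" using x y by (auto simp: FT_def)
  have "Fmap (tmul n par x y) v = (\<Sum>us\<in>?X. \<Sum>ws\<in>?Y. Fmap (tterm n par (x us) us (y ws) ws) v)"
    unfolding tmul_def
    by (simp add: Fmap_sum finite_tsupp_sum tterm_def)
  also have "\<dots> = (\<Sum>us\<in>?X. \<Sum>ws\<in>?Y. gmul (gmul (x us) (eval_word us v)) (gmul (y ws) (eval_word ws v)))"
  proof (intro sum.cong refl)
    fix us ws assume "us \<in> ?X" "ws \<in> ?Y"
    hence "set us \<subseteq> Dual n" using x by (auto simp: FT_def)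
    moreover have "x us \<in> Lam" "y ws \<in> Lam" using x y by (auto simp: FT_def)
    ultimately show "Fmap (tterm n par (x us) us (y ws) ws) v = gmul (gmul (x us) (eval_word us v)) (gmul (y ws) (eval_word ws v))"
      by (rule Fmap_tterm[OF v])
  qed
  also have "\<dots> = gmul (Fmap x v) (Fmap y v)"
    by (simp only: Fmap_eval_word gmul_sum_left) (simp only: gmul_sum_right)
  finally show ?thesis .
qed

lemma foldr_xor: "foldr (\<lambda>a b. a \<noteq> b) ds e = (e \<noteq> foldr (\<lambda>a b. a \<noteq> b) ds False)"
  by (induction ds) auto

lemma lpar_eval_word:
  assumes "length ds = length us" "\<forall>k<length us. dpar n par (ds ! k) (us ! k)" "v \<in> M0 n par"
  shows "lpar (foldr (\<lambda>a b. a \<noteq> b) ds False) (eval_word us v)"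
  using assms(1,2)
proof (induction us arbitrary: ds)
  case Nil thus ?case by (simp add: eval_word_Nil)
next
  case (Cons u us)
  then obtain d ds' where ds: "ds = d # ds'" by (cases ds) auto
  have "lpar d (u v)" using Cons.prems ds dpar_apply_M0[OF _ assms(3)] by fastforce
  moreover have "lpar (foldr (\<lambda>a b. a \<noteq> b) ds' False) (eval_word us v)"
    using Cons.prems ds by (intro Cons.IH) auto
  ultimately have "lpar (d \<noteq> foldr (\<lambda>a b. a \<noteq> b) ds' False) (gmul (u v) (eval_word us v))"
    by (rule lpar_gmul)
  thus ?case using ds by (simp add: eval_word_Cons)
qed

lemma lpar_Fmap:
  assumes x: "x \<in> FT n" and h: "fhom n par d x" and v: "v \<in> M0 n par"
  shows "lpar d (Fmap x v)"
  unfolding Fmap_eval_word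
proof (rule lpar_sum)
  fix us assume "us \<in> {us. x us \<noteq> 0}"
  then obtain e ds where e: "length ds = length us" "lpar e (x us)"
    "\<forall>k<length us. dpar n par (ds ! k) (us ! k)" "foldr (\<lambda>a b. a \<noteq> b) ds e = d"
    using h unfolding fhom_def by auto
  have "lpar (e \<noteq> foldr (\<lambda>a b. a \<noteq> b) ds False) (gmul (x us) (eval_word us v))"
    using lpar_gmul[OF e(2) lpar_eval_word[OF e(1) e(3) v]] .
  thus "lpar d (gmul (x us) (eval_word us v))" using e(4) foldr_xor[of ds e] by simp
qed

lemma eval_word_mright:
  assumes "set us \<subseteq> Dual n" "v \<in> Mset n" "l \<in> Lam" "lpar False l"
  shows "eval_word us (mright v l) = gmul (gpow l (length us)) (eval_word us v)"
  using assms(1)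
proof (induction us)
  case Nil thus ?case by (simp add: eval_word_Nil gmul_one_left)
next
  case (Cons u us)
  have u: "u \<in> Dual n" using Cons by auto
  have ev: "lpar False (gpow l (Suc (length us)))" using lpar_gpow[OF assms(4)] .
  have "eval_word (u # us) (mright v l) = gmul (gmul (u v) l) (gmul (gpow l (length us)) (eval_word us v))"
    using Cons by (simp add: eval_word_Cons Dual_right_linear[OF u assms(2,3)])
  also have "\<dots> = gmul (gmul (u v) (gpow l (Suc (length us)))) (eval_word us v)"
    by (simp add: gmul_assoc)
  also have "\<dots> = gmul (gpow l (Suc (length us))) (gmul (u v) (eval_word us v))"
    by (subst gmul_commute_even[OF ev]) (simp only: gmul_assoc)
  finally show ?case by (simp add: eval_word_Cons)
qed

lemma Fmap_mleft:
  assumes x: "x \<in> FTdeg n r" and l: "l \<in> Lam" "lpar False l" and v: "v \<in> M0 n par"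
  shows "Fmap x (mleft par l v) = gmul (gpow l r) (Fmap x v)"
proof -
  have ev: "lpar False (gpow l r)" using lpar_gpow[OF l(2)] .
  have "Fmap x (mleft par l v) = (\<Sum>us\<in>{us. x us \<noteq> 0}. gmul (x us) (eval_word us (mright v l)))"
    by (simp add: Fmap_eval_word mleft_even_eq_mright[OF l(2)])
  also have "\<dots> = (\<Sum>us\<in>{us. x us \<noteq> 0}. gmul (gpow l r) (gmul (x us) (eval_word us v)))"
  proof (intro sum.cong refl)
    fix us assume "us \<in> {us. x us \<noteq> 0}"
    hence "set us \<subseteq> Dual n" "length us = r" using x by (auto simp: FTdeg_def FT_def)
    thus "gmul (x us) (eval_word us (mright v l)) = gmul (gpow l r) (gmul (x us) (eval_word us v))"
      using eval_word_mright[OF _ M0_Mset[OF v] l] 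
      by (simp add: gmul_assoc[symmetric] gmul_commute_even[OF ev])
  qed
  also have "\<dots> = gmul (gpow l r) (Fmap x v)" by (simp add: Fmap_eval_word gmul_sum_right)
  finally show ?thesis .
qed

theorem proposition3p14:
  fixes n :: nat and par :: "nat \<Rightarrow> bool"
  shows
   "(\<forall>x\<in>FT n. (\<forall>v\<in>M0 n par. Fmap x v = 0) \<longleftrightarrow> x \<in> Krel n par)
    \<and> (\<forall>x\<in>FT n. \<forall>y\<in>FT n. \<forall>v\<in>M0 n par.
          Fmap (tmul n par x y) v = gmul (Fmap x v) (Fmap y v))
    \<and> (\<forall>v\<in>M0 n par. Fmap (fsingle (gconst 1) []) v = gconst 1)
    \<and> (\<forall>x\<in>FT n. \<forall>y\<in>FT n. \<forall>v\<in>M0 n par. Fmap (x + y) v = Fmap x v + Fmap y v)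
    \<and> (\<forall>l\<in>Lam. \<forall>x\<in>FT n. \<forall>v\<in>M0 n par. Fmap (flmul l x) v = gmul l (Fmap x v))
    \<and> (\<forall>d. \<forall>x\<in>FT n. fhom n par d x \<longrightarrow> (\<forall>v\<in>M0 n par. lpar d (Fmap x v)))
    \<and> (\<forall>r. \<forall>x\<in>FTdeg n r. \<forall>l\<in>Lam. lpar False l \<longrightarrow>
          (\<forall>v\<in>M0 n par. Fmap x (mleft par l v) = gmul (gpow l r) (Fmap x v)))"
proof (intro conjI ballI allI impI)
  fix x assume x: "x \<in> FT n"
  show "(\<forall>v\<in>M0 n par. Fmap x v = 0) \<longleftrightarrow> x \<in> Krel n par"
    using Krel_if_Fmap_eq_0[OF x] Fmap_Krel_eq_0 by blast
next
  fix x y v assume "x \<in> FT n" "y \<in> FT n" "v \<in> M0 n par"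
  thus "Fmap (tmul n par x y) v = gmul (Fmap x v) (Fmap y v)" by (rule Fmap_tmul)
next
  fix v assume "v \<in> M0 n par"
  show "Fmap (fsingle (gconst 1) []) v = gconst 1"
    by (simp add: Fmap_fsingle eval_word_Nil gmul_one_left)
next
  fix x y v assume "x \<in> FT n" "y \<in> FT n" "v \<in> M0 n par"
  thus "Fmap (x + y) v = Fmap x v + Fmap y v" by (intro Fmap_add finite_tsupp_FT)
next
  fix l x v assume "l \<in> Lam" "x \<in> FT n" "v \<in> M0 n par"
  thus "Fmap (flmul l x) v = gmul l (Fmap x v)" by (intro Fmap_flmul finite_tsupp_FT)
next
  fix d x v assume "x \<in> FT n" "fhom n par d x" "v \<in> M0 n par"
  thus "lpar d (Fmap x v)" by (rule lpar_Fmap)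
next
  fix r x l v assume "x \<in> FTdeg n r" "l \<in> Lam" "lpar False l" "v \<in> M0 n par"
  thus "Fmap x (mleft par l v) = gmul (gpow l r) (Fmap x v)" by (rule Fmap_mleft)
qed

end
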